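(* Let $G$ and $G'$ be finite groups. Then $G$ and $G'$ are both almost monomial if and only if the direct product $G\times G'$ is almost monomial.
   Context: A finite group $G$ is called almost monomial if for every two distinct complex irreducible characters $\chi$ and $\psi$ of $G$ there exist a subgroup $H\le G$ and a linear (degree one) character $\varphi$ of $H$ such that the induced character $\operatorname{Ind}_H^G\varphi$ contains $\chi$ (i.e. $\langle \operatorname{Ind}_H^G\varphi,\chi\rangle\neq 0$) and does not contain $\psi$ (i.e. $\langle \operatorname{Ind}_H^G\varphi,\psi\rangle=0$), where $\langle\,,\rangle$ is the usual inner product of class functions. *)

theory Defs
  imports "HOL-Algebra.Algebra" "Jordan_Normal_Form.Matrix"
begin

definition is_rep :: "('a, 'b) monoid_scheme \<Rightarrow> nat \<Rightarrow> ('a \<Rightarrow> complex mat) \<Rightarrow> bool" where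
  "is_rep G n \<rho> \<longleftrightarrow>
     (\<forall>g\<in>carrier G. \<rho> g \<in> carrier_mat n n) \<and>
     \<rho> \<one>\<^bsub>G\<^esub> = 1\<^sub>m n \<and>
     (\<forall>x\<in>carrier G. \<forall>y\<in>carrier G. \<rho> (x \<otimes>\<^bsub>G\<^esub> y) = \<rho> x * \<rho> y)"

definition invariant_subspace :: "('a, 'b) monoid_scheme \<Rightarrow> nat \<Rightarrow> ('a \<Rightarrow> complex mat) \<Rightarrow> complex vec set \<Rightarrow> bool" where
  "invariant_subspace G n \<rho> W \<longleftrightarrow>
     W \<subseteq> carrier_vec n \<and> 0\<^sub>v n \<in> W \<and>
     (\<forall>v\<in>W. \<forall>w\<in>W. v + w \<in> W) \<and>
     (\<forall>c. \<forall>v\<in>W. c \<cdot>\<^sub>v v \<in> W) \<and>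
     (\<forall>g\<in>carrier G. \<forall>v\<in>W. \<rho> g *\<^sub>v v \<in> W)"

definition irreducible_rep :: "('a, 'b) monoid_scheme \<Rightarrow> nat \<Rightarrow> ('a \<Rightarrow> complex mat) \<Rightarrow> bool" where
  "irreducible_rep G n \<rho> \<longleftrightarrow> n > 0 \<and> is_rep G n \<rho> \<and>
     (\<forall>W. invariant_subspace G n \<rho> W \<longrightarrow> W = {0\<^sub>v n} \<or> W = carrier_vec n)"

definition mat_trace :: "complex mat \<Rightarrow> complex" where
  "mat_trace A = (\<Sum>i<dim_row A. A $$ (i, i))"

text \<open>Class functions are functions on the carrier, taken to be 0 outside it.\<close>
definition irr_char :: "('a, 'b) monoid_scheme \<Rightarrow> ('a \<Rightarrow> complex) \<Rightarrow> bool" where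
  "irr_char G \<chi> \<longleftrightarrow> (\<exists>n \<rho>. irreducible_rep G n \<rho> \<and>
     \<chi> = (\<lambda>g. if g \<in> carrier G then mat_trace (\<rho> g) else 0))"

definition linear_char :: "('a, 'b) monoid_scheme \<Rightarrow> 'a set \<Rightarrow> ('a \<Rightarrow> complex) \<Rightarrow> bool" where
  "linear_char G H \<phi> \<longleftrightarrow> (\<forall>h\<in>H. \<phi> h \<noteq> 0) \<and>
     (\<forall>x\<in>H. \<forall>y\<in>H. \<phi> (x \<otimes>\<^bsub>G\<^esub> y) = \<phi> x * \<phi> y)"

definition induced :: "('a, 'b) monoid_scheme \<Rightarrow> 'a set \<Rightarrow> ('a \<Rightarrow> complex) \<Rightarrow> 'a \<Rightarrow> complex" where
  "induced G H \<phi> g = (if g \<in> carrier G then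
     (\<Sum>x\<in>carrier G. (if x \<otimes>\<^bsub>G\<^esub> g \<otimes>\<^bsub>G\<^esub> inv\<^bsub>G\<^esub> x \<in> H
        then \<phi> (x \<otimes>\<^bsub>G\<^esub> g \<otimes>\<^bsub>G\<^esub> inv\<^bsub>G\<^esub> x) else 0)) / of_nat (card H)
     else 0)"

definition char_inner :: "('a, 'b) monoid_scheme \<Rightarrow> ('a \<Rightarrow> complex) \<Rightarrow> ('a \<Rightarrow> complex) \<Rightarrow> complex" where
  "char_inner G \<alpha> \<beta> = (\<Sum>g\<in>carrier G. \<alpha> g * cnj (\<beta> g)) / of_nat (card (carrier G))"

definition almost_monomial :: "('a, 'b) monoid_scheme \<Rightarrow> bool" where
  "almost_monomial G \<longleftrightarrow>
     (\<forall>\<chi> \<psi>. irr_char G \<chi> \<and> irr_char G \<psi> \<and> \<chi> \<noteq> \<psi> \<longrightarrow>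
        (\<exists>H \<phi>. subgroup H G \<and> linear_char G H \<phi> \<and>
           char_inner G (induced G H \<phi>) \<chi> \<noteq> 0 \<and>
           char_inner G (induced G H \<phi>) \<psi> = 0))"

end

theory Submission
  imports Defs "Jordan_Normal_Form.Spectral_Radius"
begin

text \<open>The irreducible characters of \<open>G \<times>\<times> H\<close> are exactly the products of irreducible characters of
  G and of H. Hence, by Frobenius reciprocity, if a linear character \<phi> of \<open>S \<le> G\<close> separates the
  G-factors of two irreducible characters of \<open>G \<times>\<times> H\<close>, the linear character \<open>\<phi> \<times> 1\<close> of \<open>S \<times> 1\<close>
  separates the characters themselves, and symmetrically for H.

  Conversely, almost monomiality passes to homomorphic images h(G): irreducible characters of h(G)
  pull back to irreducible characters of G, and a linear character of K \<le> G that is not orthogonal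
  to a pulled back character is trivial on \<open>K \<inter> ker h\<close>, so it factors through a linear character
  of h(K) which separates the same characters.\<close>

section \<open>Matrices\<close>

lemma index_mult_mat_sum:
  assumes "A \<in> carrier_mat n m" "B \<in> carrier_mat m p" "i < n" "j < p"
  shows "(A * B) $$ (i,j) = (\<Sum>k<m. A $$ (i,k) * B $$ (k,j))"
  using assms by (simp add: scalar_prod_def atLeast0LessThan)

lemma index_mult_mat_vec_sum:
  assumes "A \<in> carrier_mat n m" "v \<in> carrier_vec m" "i < n"
  shows "(A *\<^sub>v v) $ i = (\<Sum>k<m. A $$ (i,k) * v $ k)"
  using assms by (simp add: scalar_prod_def atLeast0LessThan)

lemma index_mult_mat_unit_vec:
  assumes "(M :: complex mat) \<in> carrier_mat k m" "i < k" "j < m"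
  shows "(M *\<^sub>v unit_vec m j) $ i = M $$ (i,j)"
  using assms by (subst index_mult_mat_vec_sum[of M k m]) (auto simp: if_distrib[of "\<lambda>x. _ * x"] cong: if_cong)

lemma mat_eq_by_mult_vec:
  assumes M: "(M :: complex mat) \<in> carrier_mat k m" and N: "N \<in> carrier_mat k m"
    and eq: "\<And>v. v \<in> carrier_vec m \<Longrightarrow> M *\<^sub>v v = N *\<^sub>v v"
  shows "M = N"
proof (rule eq_matI)
  fix i j assume "i < dim_row N" "j < dim_col N"
  with N have i: "i < k" and j: "j < m" by auto
  show "M $$ (i,j) = N $$ (i,j)"
    using index_mult_mat_unit_vec[OF M i j] index_mult_mat_unit_vec[OF N i j] eq[of "unit_vec m j"] by simp
qed (use M N in auto)

lemma smult_one_mult_vec: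
  assumes x: "(x :: complex vec) \<in> carrier_vec k"
  shows "(c \<cdot>\<^sub>m 1\<^sub>m k) *\<^sub>v x = c \<cdot>\<^sub>v x"
proof (intro eq_vecI)
  fix i assume "i < dim_vec (c \<cdot>\<^sub>v x)"
  with x have i: "i < k" by simp
  have "((c \<cdot>\<^sub>m 1\<^sub>m k) *\<^sub>v x) $ i = (\<Sum>j<k. (if i = j then c else 0) * x $ j)"
    by (subst index_mult_mat_vec_sum[OF _ x i]) (auto intro!: sum.cong simp: i)
  also have "\<dots> = c * x $ i" using i by (simp add: if_distrib[of "\<lambda>t. t * _"] cong: if_cong)
  finally show "((c \<cdot>\<^sub>m 1\<^sub>m k) *\<^sub>v x) $ i = (c \<cdot>\<^sub>v x) $ i" using i x by simp
qed (use x in simp)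

lemma assoc_mult_mat_dims[simp]:
  "dim_col A = dim_row B \<Longrightarrow> dim_col B = dim_row C \<Longrightarrow> (A * B) * C = A * (B * (C :: complex mat))"
  by (rule assoc_mult_mat[of A "dim_row A" "dim_col A" B "dim_col B" C "dim_col C"]) (auto intro: carrier_matI)

lemma mat_trace_mult_comm:
  assumes "A \<in> carrier_mat n m" "B \<in> carrier_mat m n"
  shows "mat_trace (A * B) = mat_trace (B * A)"
proof -
  have "mat_trace (A * B) = (\<Sum>i<n. \<Sum>k<m. A $$ (i,k) * B $$ (k,i))"
    using assms by (simp add: mat_trace_def scalar_prod_def atLeast0LessThan)
  also have "\<dots> = (\<Sum>k<m. \<Sum>i<n. B $$ (k,i) * A $$ (i,k))"
    by (subst sum.swap) (simp add: mult.commute)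
  also have "\<dots> = mat_trace (B * A)"
    using assms by (simp add: mat_trace_def scalar_prod_def atLeast0LessThan)
  finally show ?thesis .
qed

lemma mat_trace_one [simp]: "mat_trace (1\<^sub>m n) = of_nat n"
  by (simp add: mat_trace_def)

lemma mat_trace_smult: "M \<in> carrier_mat m m \<Longrightarrow> mat_trace (c \<cdot>\<^sub>m M) = c * mat_trace M"
  by (auto simp: mat_trace_def sum_distrib_left intro!: sum.cong)

definition inj_mat :: "complex mat \<Rightarrow> bool" where
  "inj_mat P \<longleftrightarrow> (\<forall>v\<in>carrier_vec (dim_col P). P *\<^sub>v v = 0\<^sub>v (dim_row P) \<longrightarrow> v = 0\<^sub>v (dim_col P))"

lemma inj_matD: "inj_mat P \<Longrightarrow> P \<in> carrier_mat n d \<Longrightarrow> v \<in> carrier_vec d \<Longrightarrow> P *\<^sub>v v = 0\<^sub>v n \<Longrightarrow> v = 0\<^sub>v d"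
  by (simp add: inj_mat_def)

lemma inj_mat_one: "inj_mat (1\<^sub>m n)"
  by (simp add: inj_mat_def)

lemma inj_mat_mult:
  assumes P: "P \<in> carrier_mat n d" and Q: "Q \<in> carrier_mat d e" and "inj_mat P" "inj_mat Q"
  shows "inj_mat (P * Q)"
  unfolding inj_mat_def
proof (intro ballI impI)
  fix v assume "v \<in> carrier_vec (dim_col (P * Q))" and z: "P * Q *\<^sub>v v = 0\<^sub>v (dim_row (P * Q))"
  with Q have v: "v \<in> carrier_vec e" by simp
  have "P *\<^sub>v (Q *\<^sub>v v) = 0\<^sub>v n" using z P Q v by simp
  then have "Q *\<^sub>v v = 0\<^sub>v d" using inj_matD[OF \<open>inj_mat P\<close> P] Q v by simp
  then show "v = 0\<^sub>v (dim_col (P * Q))" using inj_matD[OF \<open>inj_mat Q\<close> Q v] Q by simp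
qed

lemma inj_mat_cancel_vec:
  assumes Q: "Q \<in> carrier_mat d e" and "inj_mat Q" and x: "x \<in> carrier_vec e" and y: "y \<in> carrier_vec e"
    and eq: "Q *\<^sub>v x = Q *\<^sub>v y"
  shows "x = y"
proof -
  have "Q *\<^sub>v (x - y) = Q *\<^sub>v x - Q *\<^sub>v y" using Q x y by (simp add: mult_minus_distrib_mat_vec)
  also have "\<dots> = 0\<^sub>v d" using eq Q y by simp
  finally have "x - y = 0\<^sub>v e" using inj_matD[OF \<open>inj_mat Q\<close> Q] x y by simp
  then have "\<And>i. i < e \<Longrightarrow> x $ i - y $ i = 0"
    using x y by (metis carrier_vecD index_minus_vec(1) index_zero_vec(1))
  then show ?thesis using x y by (intro eq_vecI) auto
qed

lemma inj_mat_cancel: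
  assumes Q: "Q \<in> carrier_mat d e" and inj: "inj_mat Q" and M: "M \<in> carrier_mat e k" and N: "N \<in> carrier_mat e k"
    and eq: "Q * M = Q * N"
  shows "M = N"
proof (rule mat_col_eqI)
  fix j assume "j < dim_col N"
  with N have j: "j < k" by simp
  have "Q *\<^sub>v col M j = Q *\<^sub>v col N j"
    using eq col_mult2[OF Q M j] col_mult2[OF Q N j] by simp
  then show "col M j = col N j" using inj_mat_cancel_vec[OF Q inj] M N j by auto
qed (use M N in auto)

lemma inj_mat_dim_le:
  assumes P: "P \<in> carrier_mat n m" and inj: "inj_mat P"
  shows "m \<le> n"
proof (rule ccontr)
  assume "\<not> m \<le> n"
  then have nm: "n < m" by simp
  txt \<open>Pad P with zero rows to a singular square matrix and take a kernel vector.\<close>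
  define Q where "Q = mat m m (\<lambda>(i,j). if i < n then P $$ (i,j) else (0::complex))"
  have Q: "Q \<in> carrier_mat m m" by (simp add: Q_def)
  have Q_rows: "Q = mat\<^sub>r m m (\<lambda>i. if i = m - 1 then 0\<^sub>v m else row Q i)"
    using nm by (intro eq_matI) (auto simp: Q_def mat_of_rows_def)
  have "det Q = 0"
    by (subst Q_rows, rule det_row_0) (use nm Q in auto)
  then obtain v where v: "v \<in> carrier_vec m" "v \<noteq> 0\<^sub>v m" "Q *\<^sub>v v = 0\<^sub>v m"
    using det_0_iff_vec_prod_zero_field[OF Q] by blast
  have "P *\<^sub>v v = 0\<^sub>v n"
  proof (rule eq_vecI)
    fix i assume "i < dim_vec (0\<^sub>v n :: complex vec)"
    then have i: "i < n" by simp
    have "(P *\<^sub>v v) $ i = (\<Sum>k<m. P $$ (i,k) * v $ k)" using index_mult_mat_vec_sum[OF P v(1) i] .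
    also have "\<dots> = (Q *\<^sub>v v) $ i"
      by (subst index_mult_mat_vec_sum[OF Q v(1)]) (use i nm in \<open>auto simp: Q_def\<close>)
    finally show "(P *\<^sub>v v) $ i = 0\<^sub>v n $ i" using v(3) i nm by simp
  qed (use P in simp)
  with inj P v show False unfolding inj_mat_def by auto
qed

lemma inj_mat_square_surj:
  assumes P: "P \<in> carrier_mat n n" and inj: "inj_mat P" and w: "w \<in> carrier_vec n"
  shows "\<exists>v\<in>carrier_vec n. P *\<^sub>v v = w"
proof -
  have "det P \<noteq> 0"
    using det_0_iff_vec_prod_zero_field[OF P] inj P unfolding inj_mat_def by auto
  from det_non_zero_imp_unit[OF P this, of "()"]
  obtain B where B: "B \<in> carrier_mat n n" "P * B = 1\<^sub>m n"
    unfolding Units_def ring_mat_def by auto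
  have "P *\<^sub>v (B *\<^sub>v w) = w" using B P w by (simp flip: assoc_mult_mat_vec)
  then show ?thesis using B w by (intro bexI[of _ "B *\<^sub>v w"]) auto
qed

lemma mat_factor_through_cols:
  assumes Q: "Q \<in> carrier_mat d e" and M: "M \<in> carrier_mat d k"
    and cols: "\<And>j. j < k \<Longrightarrow> \<exists>v\<in>carrier_vec e. Q *\<^sub>v v = col M j"
  shows "\<exists>N\<in>carrier_mat e k. Q * N = M"
proof -
  define f where "f j = (SOME v. v \<in> carrier_vec e \<and> Q *\<^sub>v v = col M j)" for j
  have f: "f j \<in> carrier_vec e \<and> Q *\<^sub>v f j = col M j" if "j < k" for j
    using someI_ex[OF cols[OF that, unfolded Bex_def]] unfolding f_def .
  define N where "N = mat e k (\<lambda>(i,j). f j $ i)"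
  have N: "N \<in> carrier_mat e k" by (simp add: N_def)
  have col_N: "col N j = f j" if "j < k" for j
    using f[OF that] that by (intro eq_vecI) (auto simp: N_def)
  have "Q * N = M"
    by (rule mat_col_eqI) (use Q M N col_N f col_mult2[OF Q N] in auto)
  with N show ?thesis by blast
qed

definition subspace_vec :: "nat \<Rightarrow> complex vec set \<Rightarrow> bool" where
  "subspace_vec n W \<longleftrightarrow> W \<subseteq> carrier_vec n \<and> 0\<^sub>v n \<in> W \<and>
     (\<forall>v\<in>W. \<forall>w\<in>W. v + w \<in> W) \<and> (\<forall>c. \<forall>v\<in>W. c \<cdot>\<^sub>v v \<in> W)"

lemma subspace_vec_mat_image: "A \<in> carrier_mat n k \<Longrightarrow> subspace_vec n ((\<lambda>v. A *\<^sub>v v) ` carrier_vec k)"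
  unfolding subspace_vec_def
proof (intro conjI ballI allI)
  assume A: "A \<in> carrier_mat n k"
  then show "(\<lambda>v. A *\<^sub>v v) ` carrier_vec k \<subseteq> carrier_vec n" by auto
  have "A *\<^sub>v 0\<^sub>v k = 0\<^sub>v n" using A by (intro eq_vecI) (auto simp: scalar_prod_def)
  then show "0\<^sub>v n \<in> (\<lambda>v. A *\<^sub>v v) ` carrier_vec k" by (intro image_eqI[of _ _ "0\<^sub>v k"]) auto
  fix x y assume "x \<in> (\<lambda>v. A *\<^sub>v v) ` carrier_vec k" "y \<in> (\<lambda>v. A *\<^sub>v v) ` carrier_vec k"
  then obtain u v where "u \<in> carrier_vec k" "v \<in> carrier_vec k" "x = A *\<^sub>v u" "y = A *\<^sub>v v" by auto
  then show "x + y \<in> (\<lambda>v. A *\<^sub>v v) ` carrier_vec k"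
    by (intro image_eqI[of _ _ "u + v"]) (auto simp: mult_add_distrib_mat_vec[OF A])
next
  fix c x assume A: "A \<in> carrier_mat n k" and "x \<in> (\<lambda>v. A *\<^sub>v v) ` carrier_vec k"
  then obtain u where "u \<in> carrier_vec k" "x = A *\<^sub>v u" by auto
  then show "c \<cdot>\<^sub>v x \<in> (\<lambda>v. A *\<^sub>v v) ` carrier_vec k"
    by (intro image_eqI[of _ _ "c \<cdot>\<^sub>v u"]) (auto simp: mult_mat_vec[OF A])
qed

definition mat_append_col :: "complex mat \<Rightarrow> complex vec \<Rightarrow> complex mat" where
  "mat_append_col P w = mat (dim_row P) (Suc (dim_col P)) (\<lambda>(i,j). if j < dim_col P then P $$ (i,j) else w $ i)"

lemma mat_append_col_carrier: "P \<in> carrier_mat n m \<Longrightarrow> mat_append_col P w \<in> carrier_mat n (Suc m)"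
  by (simp add: mat_append_col_def)

lemma mat_append_col_mult_vec:
  assumes P: "P \<in> carrier_mat n m" and w: "w \<in> carrier_vec n" and v: "v \<in> carrier_vec (Suc m)"
  shows "mat_append_col P w *\<^sub>v v = P *\<^sub>v vec m (\<lambda>i. v $ i) + (v $ m) \<cdot>\<^sub>v w"
proof (rule eq_vecI)
  have P': "mat_append_col P w \<in> carrier_mat n (Suc m)" using mat_append_col_carrier[OF P] .
  fix i assume "i < dim_vec (P *\<^sub>v vec m (\<lambda>i. v $ i) + v $ m \<cdot>\<^sub>v w)"
  then have i: "i < n" using P w by simp
  have "(mat_append_col P w *\<^sub>v v) $ i = (\<Sum>k<Suc m. mat_append_col P w $$ (i,k) * v $ k)"
    using index_mult_mat_vec_sum[OF P' v i] .
  also have "\<dots> = (\<Sum>k<m. P $$ (i,k) * v $ k) + w $ i * v $ m"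
    using i P by (simp add: mat_append_col_def)
  also have "(\<Sum>k<m. P $$ (i,k) * v $ k) = (P *\<^sub>v vec m (\<lambda>i. v $ i)) $ i"
    using index_mult_mat_vec_sum[OF P _ i, of "vec m (\<lambda>i. v $ i)"] by simp
  finally show "(mat_append_col P w *\<^sub>v v) $ i = (P *\<^sub>v vec m (\<lambda>i. v $ i) + v $ m \<cdot>\<^sub>v w) $ i"
    using i w P by (simp add: mult.commute)
qed (use P w in \<open>simp add: mat_append_col_def\<close>)

lemma inj_mat_append_col:
  assumes P: "P \<in> carrier_mat n m" "inj_mat P" and w: "w \<in> carrier_vec n"
    and w_new: "\<And>v. v \<in> carrier_vec m \<Longrightarrow> P *\<^sub>v v \<noteq> w"
  shows "inj_mat (mat_append_col P w)"
  unfolding inj_mat_def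
proof (intro ballI impI)
  have P': "mat_append_col P w \<in> carrier_mat n (Suc m)" using mat_append_col_carrier[OF P(1)] .
  fix v :: "complex vec"
  assume "v \<in> carrier_vec (dim_col (mat_append_col P w))"
    "mat_append_col P w *\<^sub>v v = 0\<^sub>v (dim_row (mat_append_col P w))"
  then have v: "v \<in> carrier_vec (Suc m)" and z: "mat_append_col P w *\<^sub>v v = 0\<^sub>v n" using P' by auto
  define u where "u = vec m (\<lambda>i. v $ i)"
  have u: "u \<in> carrier_vec m" by (simp add: u_def)
  have eq: "P *\<^sub>v u + (v $ m) \<cdot>\<^sub>v w = 0\<^sub>v n"
    using mat_append_col_mult_vec[OF P(1) w v] z by (simp add: u_def)
  have last: "v $ m = 0"
  proof (rule ccontr)
    assume c: "v $ m \<noteq> 0"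
    have "P *\<^sub>v u = - ((v $ m) \<cdot>\<^sub>v w)"
    proof (rule eq_vecI)
      fix i assume "i < dim_vec (- ((v $ m) \<cdot>\<^sub>v w))"
      then have i: "i < n" using w by simp
      from arg_cong[OF eq, of "\<lambda>x. x $ i"] have "(P *\<^sub>v u) $ i + v $ m * w $ i = 0"
        using i P w u by simp
      then show "(P *\<^sub>v u) $ i = (- ((v $ m) \<cdot>\<^sub>v w)) $ i"
        using i w by (simp add: eq_neg_iff_add_eq_0)
    qed (use P w in simp)
    then have "P *\<^sub>v ((- 1 / v $ m) \<cdot>\<^sub>v u) = (- 1 / v $ m) \<cdot>\<^sub>v (- ((v $ m) \<cdot>\<^sub>v w))"
      using P u by (simp add: mult_mat_vec)
    also have "\<dots> = w"
      using c w by (intro eq_vecI) auto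
    finally show False using w_new[of "(- 1 / v $ m) \<cdot>\<^sub>v u"] u by simp
  qed
  have "0 \<cdot>\<^sub>v w = 0\<^sub>v n" using w by (intro eq_vecI) auto
  then have "P *\<^sub>v u = 0\<^sub>v n" using eq last P u by simp
  then have "u = 0\<^sub>v m" using inj_matD[OF P(2,1) u] by simp
  then have "\<And>i. i < m \<Longrightarrow> v $ i = 0"
    by (metis u_def index_vec index_zero_vec(1))
  then show "v = 0\<^sub>v (dim_col (mat_append_col P w))" using v last P'
    by (intro eq_vecI) (auto simp: less_Suc_eq)
qed

text \<open>Take an injective matrix with columns in W of maximal width; if its image missed some w \<in> W,
  appending w as a column would give a wider one.\<close>

lemma subspace_vec_basis:
  assumes W: "subspace_vec n W"
  shows "\<exists>m P. P \<in> carrier_mat n m \<and> inj_mat P \<and> (\<lambda>v. P *\<^sub>v v) ` carrier_vec m = W"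
proof -
  from W have Wc: "W \<subseteq> carrier_vec n" and W0: "0\<^sub>v n \<in> W"
    and W_add: "\<And>v w. v \<in> W \<Longrightarrow> w \<in> W \<Longrightarrow> v + w \<in> W"
    and W_smult: "\<And>c v. v \<in> W \<Longrightarrow> c \<cdot>\<^sub>v v \<in> W" unfolding subspace_vec_def by auto
  define S where "S = {m. \<exists>P. P \<in> carrier_mat n m \<and> inj_mat P \<and> (\<forall>v\<in>carrier_vec m. P *\<^sub>v v \<in> W)}"
  have "0 \<in> S"
  proof -
    have "v \<in> carrier_vec 0 \<Longrightarrow> 0\<^sub>m n 0 *\<^sub>v v = 0\<^sub>v n" for v :: "complex vec"
      by (intro eq_vecI) (auto simp: scalar_prod_def)
    moreover have "v \<in> carrier_vec 0 \<Longrightarrow> v = 0\<^sub>v 0" for v :: "complex vec"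
      by (intro eq_vecI) auto
    ultimately show ?thesis unfolding S_def inj_mat_def using W0
      by (intro CollectI exI[of _ "0\<^sub>m n 0"]) auto
  qed
  have "S \<subseteq> {..n}" unfolding S_def using inj_mat_dim_le by auto
  then have fin_S: "finite S" by (rule finite_subset) simp
  define m where "m = Max S"
  have "m \<in> S" unfolding m_def using fin_S \<open>0 \<in> S\<close> by (intro Max_in) auto
  then obtain P where P: "P \<in> carrier_mat n m" "inj_mat P" "\<And>v. v \<in> carrier_vec m \<Longrightarrow> P *\<^sub>v v \<in> W"
    unfolding S_def by auto
  have "W \<subseteq> (\<lambda>v. P *\<^sub>v v) ` carrier_vec m"
  proof (rule ccontr)
    assume "\<not> ?thesis"
    then obtain w where w: "w \<in> W" and w_new: "\<And>v. v \<in> carrier_vec m \<Longrightarrow> P *\<^sub>v v \<noteq> w" by auto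
    have wc: "w \<in> carrier_vec n" using w Wc by auto
    have "mat_append_col P w *\<^sub>v v \<in> W" if "v \<in> carrier_vec (Suc m)" for v
      unfolding mat_append_col_mult_vec[OF P(1) wc that] by (intro W_add W_smult P w) auto
    then have "Suc m \<in> S"
      unfolding S_def using mat_append_col_carrier[OF P(1)] inj_mat_append_col[OF P(1,2) wc w_new] by blast
    then have "Suc m \<le> m" unfolding m_def using fin_S by (simp add: Max_ge)
    then show False by simp
  qed
  with P show ?thesis by blast
qed

section \<open>Representations\<close>

lemma rep_carrier: "is_rep G n \<rho> \<Longrightarrow> g \<in> carrier G \<Longrightarrow> \<rho> g \<in> carrier_mat n n"
  by (simp add: is_rep_def)

lemma rep_one: "is_rep G n \<rho> \<Longrightarrow> \<rho> \<one>\<^bsub>G\<^esub> = 1\<^sub>m n"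
  by (simp add: is_rep_def)

lemma rep_mult: "is_rep G n \<rho> \<Longrightarrow> x \<in> carrier G \<Longrightarrow> y \<in> carrier G \<Longrightarrow> \<rho> (x \<otimes>\<^bsub>G\<^esub> y) = \<rho> x * \<rho> y"
  by (simp add: is_rep_def)

lemma rep_mult_index:
  assumes "is_rep G n \<rho>" "x \<in> carrier G" "y \<in> carrier G" "i < n" "j < n"
  shows "\<rho> (x \<otimes>\<^bsub>G\<^esub> y) $$ (i,j) = (\<Sum>a<n. \<rho> x $$ (i,a) * \<rho> y $$ (a,j))"
  using assms index_mult_mat_sum[of "\<rho> x" n n "\<rho> y" n i j] by (simp add: is_rep_def)

lemma (in group) rep_inv_mult:
  assumes "is_rep G n \<rho>" "g \<in> carrier G"
  shows "\<rho> (inv g) * \<rho> g = 1\<^sub>m n" "\<rho> g * \<rho> (inv g) = 1\<^sub>m n"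
proof -
  have "\<rho> (inv g) * \<rho> g = \<rho> (inv g \<otimes> g)" "\<rho> g * \<rho> (inv g) = \<rho> (g \<otimes> inv g)"
    using rep_mult[OF assms(1) inv_closed[OF assms(2)] assms(2)]
      rep_mult[OF assms(1) assms(2) inv_closed[OF assms(2)]] by simp_all
  then show "\<rho> (inv g) * \<rho> g = 1\<^sub>m n" "\<rho> g * \<rho> (inv g) = 1\<^sub>m n"
    using assms by (simp_all add: rep_one)
qed

lemma irreducible_rep_is_rep: "irreducible_rep G n \<rho> \<Longrightarrow> is_rep G n \<rho>"
  by (simp add: irreducible_rep_def)

lemma irreducible_rep_dim_pos: "irreducible_rep G n \<rho> \<Longrightarrow> n > 0"
  by (simp add: irreducible_rep_def)

lemma irreducible_repD:
  "irreducible_rep G n \<rho> \<Longrightarrow> invariant_subspace G n \<rho> W \<Longrightarrow> W = {0\<^sub>v n} \<or> W = carrier_vec n"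
  by (simp add: irreducible_rep_def)

lemma invariant_subspace_mat_image:
  assumes A: "A \<in> carrier_mat n k" and rep: "is_rep G n \<rho>"
    and comm: "\<And>g. g \<in> carrier G \<Longrightarrow> \<exists>B \<in> carrier_mat k k. \<rho> g * A = A * B"
  shows "invariant_subspace G n \<rho> ((\<lambda>v. A *\<^sub>v v) ` carrier_vec k)"
proof -
  define W where "W = (\<lambda>v. A *\<^sub>v v) ` carrier_vec k"
  have "\<rho> g *\<^sub>v v \<in> W" if g: "g \<in> carrier G" and v: "v \<in> W" for g v
  proof -
    obtain u where u: "u \<in> carrier_vec k" "v = A *\<^sub>v u" using v by (auto simp: W_def)
    obtain B where B: "B \<in> carrier_mat k k" "\<rho> g * A = A * B" using comm[OF g] by blast
    have "\<rho> g *\<^sub>v v = (\<rho> g * A) *\<^sub>v u" using u A rep_carrier[OF rep g] by simp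
    also have "\<dots> = A *\<^sub>v (B *\<^sub>v u)" using A B u by simp
    finally show ?thesis using B u by (auto simp: W_def)
  qed
  moreover have "subspace_vec n W"
    unfolding W_def by (rule subspace_vec_mat_image[OF A])
  ultimately show ?thesis
    unfolding W_def[symmetric] subspace_vec_def invariant_subspace_def by blast
qed

lemma schur_lemma:
  assumes irr: "irreducible_rep G d \<sigma>" and M: "M \<in> carrier_mat d d"
    and comm: "\<And>g. g \<in> carrier G \<Longrightarrow> M * \<sigma> g = \<sigma> g * M"
  shows "\<exists>c. M = c \<cdot>\<^sub>m 1\<^sub>m d"
proof -
  have d: "d > 0" and rep: "is_rep G d \<sigma>" using irr by (auto simp: irreducible_rep_def)
  from spectrum_non_empty[OF M d] obtain c where "eigenvalue M c"
    unfolding spectrum_def by auto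
  then obtain v where "eigenvector M v c" unfolding eigenvalue_def by auto
  with M have v: "v \<in> carrier_vec d" "v \<noteq> 0\<^sub>v d" "M *\<^sub>v v = c \<cdot>\<^sub>v v"
    unfolding eigenvector_def by auto
  define W where "W = {w \<in> carrier_vec d. M *\<^sub>v w = c \<cdot>\<^sub>v w}"
  have "invariant_subspace G d \<sigma> W"
    unfolding invariant_subspace_def
  proof (intro conjI ballI allI)
    show "W \<subseteq> carrier_vec d" by (auto simp: W_def)
    show "0\<^sub>v d \<in> W" using M by (auto simp: W_def)
    fix x y assume "x \<in> W" "y \<in> W"
    then show "x + y \<in> W" using M
      by (auto simp: W_def mult_add_distrib_mat_vec smult_add_distrib_vec[of _ d])
  next
    fix a x assume "x \<in> W"
    then show "a \<cdot>\<^sub>v x \<in> W" using M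
      by (auto simp: W_def mult_mat_vec smult_smult_assoc mult.commute)
  next
    fix g x assume g: "g \<in> carrier G" and x: "x \<in> W"
    have \<sigma>g: "\<sigma> g \<in> carrier_mat d d" using rep_carrier[OF rep g] .
    have "M *\<^sub>v (\<sigma> g *\<^sub>v x) = (M * \<sigma> g) *\<^sub>v x" using M \<sigma>g x by (simp add: W_def)
    also have "\<dots> = (\<sigma> g * M) *\<^sub>v x" using comm g by simp
    also have "\<dots> = \<sigma> g *\<^sub>v (c \<cdot>\<^sub>v x)" using M \<sigma>g x by (simp add: W_def)
    also have "\<dots> = c \<cdot>\<^sub>v (\<sigma> g *\<^sub>v x)" using \<sigma>g x by (simp add: W_def mult_mat_vec)
    finally show "\<sigma> g *\<^sub>v x \<in> W" using \<sigma>g x by (simp add: W_def)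
  qed
  moreover have "W \<noteq> {0\<^sub>v d}" using v by (auto simp: W_def)
  ultimately have W: "W = carrier_vec d" using irreducible_repD[OF irr] by blast
  have "M *\<^sub>v w = (c \<cdot>\<^sub>m 1\<^sub>m d) *\<^sub>v w" if w: "w \<in> carrier_vec d" for w
  proof -
    have "w \<in> W" using W w by blast
    then show ?thesis using w unfolding W_def by (simp add: smult_one_mult_vec)
  qed
  then have "M = c \<cdot>\<^sub>m 1\<^sub>m d" by (intro mat_eq_by_mult_vec[OF M]) auto
  then show ?thesis ..
qed

context group
begin

lemma inv_mult_cancel_left: "y \<in> carrier G \<Longrightarrow> x \<in> carrier G \<Longrightarrow> y \<otimes> (inv y \<otimes> x) = x"
  by (metis m_assoc r_inv l_one inv_closed)

lemma mult_inv_cancel_left: "y \<in> carrier G \<Longrightarrow> x \<in> carrier G \<Longrightarrow> inv y \<otimes> (y \<otimes> x) = x"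
  by (metis m_assoc l_inv l_one inv_closed)

lemma inv_mult_cancel_right: "y \<in> carrier G \<Longrightarrow> x \<in> carrier G \<Longrightarrow> x \<otimes> inv y \<otimes> y = x"
  by (metis m_assoc l_inv r_one inv_closed)

lemma sum_carrier_mult_left: "h \<in> carrier G \<Longrightarrow> (\<Sum>g\<in>carrier G. f (h \<otimes> g)) = (\<Sum>g\<in>carrier G. f g)"
  by (rule sum.reindex_bij_witness[where i="\<lambda>g. inv h \<otimes> g" and j="\<lambda>g. h \<otimes> g"])
    (auto simp: inv_mult_cancel_left mult_inv_cancel_left)

lemma sum_carrier_mult_right: "h \<in> carrier G \<Longrightarrow> (\<Sum>g\<in>carrier G. f (g \<otimes> h)) = (\<Sum>g\<in>carrier G. f g)"
  by (rule sum.reindex_bij_witness[where i="\<lambda>g. g \<otimes> inv h" and j="\<lambda>g. g \<otimes> h"])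
    (auto simp: inv_mult_cancel_right m_assoc)

lemma sum_carrier_conj: "x \<in> carrier G \<Longrightarrow> (\<Sum>g\<in>carrier G. f (x \<otimes> g \<otimes> inv x)) = (\<Sum>g\<in>carrier G. f g)"
  by (rule sum.reindex_bij_witness[where i="\<lambda>g. inv x \<otimes> g \<otimes> x" and j="\<lambda>g. x \<otimes> g \<otimes> inv x"])
    (auto simp: m_assoc inv_mult_cancel_left mult_inv_cancel_left)

lemma sum_subgroup_mult_left:
  assumes K: "subgroup K G" and a: "a \<in> K"
  shows "(\<Sum>k\<in>K. f (a \<otimes> k)) = (\<Sum>k\<in>K. f k)"
proof -
  have "x \<in> carrier G" if "x \<in> K" for x using that subgroup.subset[OF K] by blast
  then show ?thesis
    using subgroup.m_closed[OF K] subgroup.m_inv_closed[OF K] a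
    by (intro sum.reindex_bij_witness[where i="\<lambda>k. inv a \<otimes> k" and j="\<lambda>k. a \<otimes> k"])
      (auto simp: inv_mult_cancel_left mult_inv_cancel_left)
qed

text \<open>For fixed j, k the matrix with (i,l)-entry \<open>\<Sum>g. \<sigma> g $$ (i,j) * \<sigma> (inv g) $$ (k,l)\<close>
  commutes with \<sigma>, hence is scalar by Schur's lemma; its trace identifies the scalar.\<close>

lemma schur_orthogonality:
  assumes irr: "irreducible_rep G d \<sigma>"
    and ijkl: "i < d" "j < d" "k < d" "l < d"
  shows "(\<Sum>g\<in>carrier G. \<sigma> g $$ (i,j) * \<sigma> (inv g) $$ (k,l)) =
         (if i = l \<and> j = k then of_nat (card (carrier G)) / of_nat d else 0)"
proof -
  have d: "d > 0" and rep: "is_rep G d \<sigma>" using irr by (auto simp: irreducible_rep_def)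
  note \<sigma>_carrier = rep_carrier[OF rep]
  define M where "M = mat d d (\<lambda>(i,l). \<Sum>g\<in>carrier G. \<sigma> g $$ (i,j) * \<sigma> (inv g) $$ (k,l))"
  have M: "M \<in> carrier_mat d d" by (simp add: M_def)
  have comm: "M * \<sigma> h = \<sigma> h * M" if h: "h \<in> carrier G" for h
  proof (rule eq_matI)
    fix i l assume "i < dim_row (\<sigma> h * M)" "l < dim_col (\<sigma> h * M)"
    then have i: "i < d" and l: "l < d" using \<sigma>_carrier[OF h] M by auto
    have "(\<sigma> h * M) $$ (i,l) = (\<Sum>a<d. \<sigma> h $$ (i,a) * (\<Sum>g\<in>carrier G. \<sigma> g $$ (a,j) * \<sigma> (inv g) $$ (k,l)))"
      using i l \<sigma>_carrier[OF h] M by (simp add: scalar_prod_def atLeast0LessThan M_def)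
    also have "\<dots> = (\<Sum>g\<in>carrier G. (\<Sum>a<d. \<sigma> h $$ (i,a) * \<sigma> g $$ (a,j)) * \<sigma> (inv g) $$ (k,l))"
      by (simp add: sum_distrib_left sum_distrib_right mult.assoc) (rule sum.swap)
    also have "\<dots> = (\<Sum>g\<in>carrier G. \<sigma> (h \<otimes> g) $$ (i,j) * \<sigma> (inv g) $$ (k,l))"
      using rep_mult_index[OF rep h _ i ijkl(2)] by simp
    also have "\<dots> = (\<Sum>g\<in>carrier G. \<sigma> (h \<otimes> (inv h \<otimes> g)) $$ (i,j) * \<sigma> (inv (inv h \<otimes> g)) $$ (k,l))"
      using sum_carrier_mult_left[OF inv_closed[OF h], of "\<lambda>g. \<sigma> (h \<otimes> g) $$ (i,j) * \<sigma> (inv g) $$ (k,l)"] by simp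
    also have "\<dots> = (\<Sum>g\<in>carrier G. \<sigma> g $$ (i,j) * \<sigma> (inv g \<otimes> h) $$ (k,l))"
      using h by (intro sum.cong) (auto simp: m_assoc[symmetric] inv_mult_group)
    also have "\<dots> = (\<Sum>g\<in>carrier G. \<sigma> g $$ (i,j) * (\<Sum>a<d. \<sigma> (inv g) $$ (k,a) * \<sigma> h $$ (a,l)))"
      using rep_mult_index[OF rep _ h ijkl(3) l] by simp
    also have "\<dots> = (\<Sum>a<d. (\<Sum>g\<in>carrier G. \<sigma> g $$ (i,j) * \<sigma> (inv g) $$ (k,a)) * \<sigma> h $$ (a,l))"
      by (simp add: sum_distrib_left sum_distrib_right mult.assoc) (rule sum.swap)
    also have "\<dots> = (M * \<sigma> h) $$ (i,l)"
      using i l \<sigma>_carrier[OF h] M by (simp add: scalar_prod_def atLeast0LessThan M_def)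
    finally show "(M * \<sigma> h) $$ (i, l) = (\<sigma> h * M) $$ (i, l)" by simp
  qed (use M \<sigma>_carrier[OF h] in auto)
  obtain c where Mc: "M = c \<cdot>\<^sub>m 1\<^sub>m d" using schur_lemma[OF irr M comm] by blast
  have "mat_trace M = (\<Sum>i<d. \<Sum>g\<in>carrier G. \<sigma> (inv g) $$ (k,i) * \<sigma> g $$ (i,j))"
    by (simp add: mat_trace_def M_def mult.commute)
  also have "\<dots> = (\<Sum>g\<in>carrier G. (\<sigma> (inv g) * \<sigma> g) $$ (k,j))"
    using ijkl by (subst sum.swap, intro sum.cong refl, subst index_mult_mat_sum[OF \<sigma>_carrier \<sigma>_carrier], auto)
  also have "\<dots> = (\<Sum>g\<in>carrier G. (1\<^sub>m d) $$ (k,j))"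
    by (intro sum.cong) (auto simp: rep_inv_mult[OF rep])
  finally have "mat_trace M = of_nat (card (carrier G)) * (if k = j then 1 else 0)"
    using ijkl by simp
  moreover have "mat_trace M = c * of_nat d" using Mc by (simp add: mat_trace_def)
  ultimately have c: "c = of_nat (card (carrier G)) * (if k = j then 1 else 0) / of_nat d"
    using d by (simp add: field_simps)
  have "(\<Sum>g\<in>carrier G. \<sigma> g $$ (i,j) * \<sigma> (inv g) $$ (k,l)) = M $$ (i,l)"
    using ijkl by (simp add: M_def)
  also have "\<dots> = (if i = l then c else 0)" using Mc ijkl by simp
  finally show ?thesis using c by auto
qed

lemma schur_orthogonality_convolution:
  assumes irr: "irreducible_rep G d \<sigma>"
    and ijkl: "i < d" "j < d" "k < d" "l < d" and x: "x \<in> carrier G"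
  shows "(\<Sum>y\<in>carrier G. \<sigma> (inv y) $$ (j,i) * \<sigma> (inv (inv y \<otimes> x)) $$ (l,k)) =
         (if j = k then of_nat (card (carrier G)) / of_nat d * \<sigma> (inv x) $$ (l,i) else 0)"
proof -
  have rep: "is_rep G d \<sigma>" using irr by (simp add: irreducible_rep_def)
  have "(\<Sum>y\<in>carrier G. \<sigma> (inv y) $$ (j,i) * \<sigma> (inv (inv y \<otimes> x)) $$ (l,k)) =
        (\<Sum>y\<in>carrier G. \<sigma> (inv y) $$ (j,i) * (\<Sum>p<d. \<sigma> (inv x) $$ (l,p) * \<sigma> y $$ (p,k)))"
    using x ijkl by (intro sum.cong refl) (simp add: inv_mult_group rep_mult_index[OF rep])
  also have "\<dots> = (\<Sum>p<d. \<sigma> (inv x) $$ (l,p) * (\<Sum>y\<in>carrier G. \<sigma> y $$ (p,k) * \<sigma> (inv y) $$ (j,i)))"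
    by (simp add: sum_distrib_left mult_ac, rule sum.swap)
  also have "\<dots> = (\<Sum>p<d. \<sigma> (inv x) $$ (l,p) * (if p = i \<and> k = j then of_nat (card (carrier G)) / of_nat d else 0))"
    using ijkl by (intro sum.cong refl) (simp add: schur_orthogonality[OF irr])
  also have "\<dots> = (if j = k then of_nat (card (carrier G)) / of_nat d * \<sigma> (inv x) $$ (l,i) else 0)"
    using ijkl by (auto simp: if_distrib[of "\<lambda>t. _ * t"] cong: if_cong)
  finally show ?thesis .
qed

lemma rep_restrict_invariant_subspace:
  assumes rep: "is_rep G d \<sigma>" and Q: "Q \<in> carrier_mat d e" and inj: "inj_mat Q"
    and inv: "invariant_subspace G d \<sigma> ((\<lambda>v. Q *\<^sub>v v) ` carrier_vec e)"
  shows "\<exists>\<tau>. is_rep G e \<tau> \<and> (\<forall>g\<in>carrier G. \<sigma> g * Q = Q * \<tau> g)"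
proof -
  have "\<exists>N\<in>carrier_mat e e. Q * N = \<sigma> g * Q" if g: "g \<in> carrier G" for g
  proof (rule mat_factor_through_cols[OF Q])
    show "\<sigma> g * Q \<in> carrier_mat d e" using rep_carrier[OF rep g] Q by simp
    fix j assume j: "j < e"
    have "col Q j = Q *\<^sub>v unit_vec e j"
      using Q j by (intro eq_vecI) (auto simp: index_mult_mat_unit_vec)
    then have "\<sigma> g *\<^sub>v col Q j \<in> (\<lambda>v. Q *\<^sub>v v) ` carrier_vec e"
      using inv g unfolding invariant_subspace_def by auto
    then show "\<exists>v\<in>carrier_vec e. Q *\<^sub>v v = col (\<sigma> g * Q) j"
      using col_mult2[OF rep_carrier[OF rep g] Q j] by auto
  qed
  then obtain \<tau> where \<tau>: "\<And>g. g \<in> carrier G \<Longrightarrow> \<tau> g \<in> carrier_mat e e \<and> Q * \<tau> g = \<sigma> g * Q"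
    by metis
  have "is_rep G e \<tau>"
    unfolding is_rep_def
  proof (intro conjI ballI)
    show "\<tau> g \<in> carrier_mat e e" if "g \<in> carrier G" for g using \<tau>[OF that] by simp
    have "Q * \<tau> \<one> = Q * 1\<^sub>m e"
      using \<tau>[of \<one>] Q rep_one[OF rep] by simp
    then show "\<tau> \<one> = 1\<^sub>m e"
      using inj_mat_cancel[OF Q inj _ one_carrier_mat] \<tau>[of \<one>] by blast
  next
    fix x y assume x: "x \<in> carrier G" and y: "y \<in> carrier G"
    have "Q * \<tau> (x \<otimes> y) = \<sigma> x * (\<sigma> y * Q)"
      using \<tau> x y rep_mult[OF rep x y] assoc_mult_mat[OF rep_carrier[OF rep x] rep_carrier[OF rep y] Q] by simp
    also have "\<dots> = (\<sigma> x * Q) * \<tau> y"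
      using \<tau>[OF y] assoc_mult_mat[OF rep_carrier[OF rep x] Q, of "\<tau> y" e] by simp
    also have "\<dots> = Q * (\<tau> x * \<tau> y)"
      using \<tau>[OF x] \<tau>[OF y] assoc_mult_mat[OF Q, of "\<tau> x" e "\<tau> y" e] by simp
    finally show "\<tau> (x \<otimes> y) = \<tau> x * \<tau> y"
      using inj_mat_cancel[OF Q inj] \<tau>[OF m_closed[OF x y]] \<tau>[OF x] \<tau>[OF y] by auto
  qed
  with \<tau> show ?thesis by auto
qed

lemma proper_invariant_subspace_subrep:
  assumes \<sigma>: "is_rep G d \<sigma>" and W: "invariant_subspace G d \<sigma> W"
    and nontrivial: "W \<noteq> {0\<^sub>v d}" "W \<noteq> carrier_vec d"
  shows "\<exists>e \<tau> Q. 0 < e \<and> e < d \<and> is_rep G e \<tau> \<and> Q \<in> carrier_mat d e \<and> inj_mat Q \<and>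
    (\<forall>g\<in>carrier G. \<sigma> g * Q = Q * \<tau> g)"
proof -
  have "subspace_vec d W" using W unfolding invariant_subspace_def subspace_vec_def by auto
  then obtain e Q where Q: "Q \<in> carrier_mat d e" and Q_inj: "inj_mat Q"
    and QW: "(\<lambda>v. Q *\<^sub>v v) ` carrier_vec e = W"
    using subspace_vec_basis by blast
  have "e \<noteq> d"
  proof
    assume "e = d"
    then have "carrier_vec d \<subseteq> W" using inj_mat_square_surj[of Q d] Q Q_inj QW by fastforce
    then show False using nontrivial W unfolding invariant_subspace_def by auto
  qed
  with inj_mat_dim_le[OF Q Q_inj] have "e < d" by simp
  moreover have "e > 0"
  proof (rule ccontr)
    assume "\<not> e > 0"
    then have "Q *\<^sub>v v = 0\<^sub>v d" if "v \<in> carrier_vec e" for v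
      using Q that by (auto intro!: eq_vecI simp: scalar_prod_def)
    then have "W = {0\<^sub>v d}" using QW by (auto intro: image_eqI[OF _ zero_carrier_vec])
    then show False using nontrivial by simp
  qed
  moreover obtain \<tau> where "is_rep G e \<tau>" "\<forall>g\<in>carrier G. \<sigma> g * Q = Q * \<tau> g"
    using rep_restrict_invariant_subspace[OF \<sigma> Q Q_inj] W QW by blast
  ultimately show ?thesis using Q Q_inj by blast
qed

text \<open>Take an injective intertwiner from a subrepresentation of least positive degree.\<close>

lemma exists_irreducible_subrep:
  assumes rep: "is_rep G n A" and n: "n > 0"
  shows "\<exists>d \<sigma> P. irreducible_rep G d \<sigma> \<and> P \<in> carrier_mat n d \<and> inj_mat P \<and>
           (\<forall>g\<in>carrier G. A g * P = P * \<sigma> g)"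
proof -
  define T where "T = {d. d > 0 \<and> (\<exists>\<sigma> P. is_rep G d \<sigma> \<and> P \<in> carrier_mat n d \<and> inj_mat P \<and>
           (\<forall>g\<in>carrier G. A g * P = P * \<sigma> g))}"
  have "A g * 1\<^sub>m n = 1\<^sub>m n * A g" if "g \<in> carrier G" for g
    using rep_carrier[OF rep that] by simp
  then have "n \<in> T" unfolding T_def using n rep inj_mat_one
    by (intro CollectI conjI exI[of _ A] exI[of _ "1\<^sub>m n"]) auto
  define d where "d = (LEAST d. d \<in> T)"
  have "d \<in> T" unfolding d_def by (rule LeastI) fact
  then obtain \<sigma> P where d: "d > 0" and \<sigma>: "is_rep G d \<sigma>" and P: "P \<in> carrier_mat n d"
    and P_inj: "inj_mat P" and P_intw: "\<forall>g\<in>carrier G. A g * P = P * \<sigma> g"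
    unfolding T_def by auto
  have "irreducible_rep G d \<sigma>"
    unfolding irreducible_rep_def
  proof (intro conjI d \<sigma> allI impI)
    fix W assume W: "invariant_subspace G d \<sigma> W"
    show "W = {0\<^sub>v d} \<or> W = carrier_vec d"
    proof (rule ccontr)
      assume "\<not> ?thesis"
      then obtain e \<tau> Q where e: "0 < e" "e < d" and \<tau>_rep: "is_rep G e \<tau>" and Q: "Q \<in> carrier_mat d e"
        and Q_inj: "inj_mat Q" and \<tau>: "\<forall>g\<in>carrier G. \<sigma> g * Q = Q * \<tau> g"
        using proper_invariant_subspace_subrep[OF \<sigma> W] by blast
      have "A g * (P * Q) = (P * Q) * \<tau> g" if g: "g \<in> carrier G" for g
      proof -
        have "A g * (P * Q) = (P * \<sigma> g) * Q"
          using P_intw g assoc_mult_mat[OF rep_carrier[OF rep g] P Q] by simp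
        also have "\<dots> = P * (Q * \<tau> g)"
          using \<tau> g assoc_mult_mat[OF P rep_carrier[OF \<sigma> g] Q] by simp
        also have "\<dots> = (P * Q) * \<tau> g"
          using assoc_mult_mat[OF P Q rep_carrier[OF \<tau>_rep g]] by simp
        finally show ?thesis .
      qed
      then have "e \<in> T"
        unfolding T_def using e P Q inj_mat_mult[OF P Q P_inj Q_inj] \<tau>_rep
        by (intro CollectI conjI exI[of _ \<tau>] exI[of _ "P * Q"] ballI) auto
      then have "d \<le> e" unfolding d_def by (rule Least_le)
      with \<open>e < d\<close> show False by simp
    qed
  qed
  with P P_inj P_intw show ?thesis by blast
qed

end

section \<open>The group algebra acting through a representation\<close>

lemma index_mult_mat_lessThan [simp]:
  "i < dim_row A \<Longrightarrow> j < dim_col B \<Longrightarrow> dim_col A = dim_row B \<Longrightarrow>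
    (A * B) $$ (i,j) = (\<Sum>k<dim_row B. A $$ (i,k) * B $$ (k,j))"
  by (simp add: scalar_prod_def atLeast0LessThan)

declare index_mult_mat(1) [simp del]

lemma sum_lessThan_mult_sum_right:
  "(\<Sum>c<m. (\<Sum>y\<in>S. (f y :: complex) * A y c) * B c) = (\<Sum>y\<in>S. f y * (\<Sum>c<m. A y c * B c))"
  by (simp only: sum_distrib_left sum_distrib_right mult.assoc, rule sum.swap)

lemma sum_lessThan_mult_sum_left:
  "(\<Sum>c<m. A c * (\<Sum>y\<in>S. (f y :: complex) * B y c)) = (\<Sum>y\<in>S. f y * (\<Sum>c<m. A c * B y c))"
  by (simp only: sum_distrib_left, subst sum.swap, rule sum.cong[OF refl], rule sum.cong[OF refl], simp)

definition group_alg_mat :: "('a,'b) monoid_scheme \<Rightarrow> ('a \<Rightarrow> complex mat) \<Rightarrow> nat \<Rightarrow> ('a \<Rightarrow> complex) \<Rightarrow> complex mat" where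
  "group_alg_mat G R m f = mat m m (\<lambda>(a,b). \<Sum>g\<in>carrier G. f g * R g $$ (a,b))"

lemma group_alg_mat_carrier [simp]: "group_alg_mat G R m f \<in> carrier_mat m m"
  by (simp add: group_alg_mat_def)

lemma group_alg_mat_dim [simp]: "dim_row (group_alg_mat G R m f) = m" "dim_col (group_alg_mat G R m f) = m"
  by (simp_all add: group_alg_mat_def)

lemma index_group_alg_mat:
  "a < m \<Longrightarrow> b < m \<Longrightarrow> group_alg_mat G R m f $$ (a,b) = (\<Sum>g\<in>carrier G. f g * R g $$ (a,b))"
  by (simp add: group_alg_mat_def)

lemma group_alg_mat_cong:
  "(\<And>x. x \<in> carrier G \<Longrightarrow> f x = f' x) \<Longrightarrow> group_alg_mat G R m f = group_alg_mat G R m f'"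
  unfolding group_alg_mat_def by (intro eq_matI) auto

lemma group_alg_mat_smult: "group_alg_mat G R m (\<lambda>x. c * f x) = c \<cdot>\<^sub>m group_alg_mat G R m f"
  unfolding group_alg_mat_def by (intro eq_matI) (auto simp: sum_distrib_left mult.assoc)

lemma group_alg_mat_zero: "group_alg_mat G R m (\<lambda>x. 0) = 0\<^sub>m m m"
  by (intro eq_matI) (auto simp: index_group_alg_mat)

lemma mat_trace_mult_group_alg_mat_sum:
  assumes M: "M \<in> carrier_mat m m" and fin: "finite I"
  shows "mat_trace (M * group_alg_mat G R m (\<lambda>x. \<Sum>i\<in>I. f i x)) = (\<Sum>i\<in>I. mat_trace (M * group_alg_mat G R m (f i)))"
proof -
  have "mat_trace (M * group_alg_mat G R m (\<lambda>x. \<Sum>i\<in>I. f i x)) =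
     (\<Sum>a<m. \<Sum>c<m. M $$ (a,c) * (\<Sum>g\<in>carrier G. (\<Sum>i\<in>I. f i g) * R g $$ (c,a)))"
    using M by (simp add: mat_trace_def index_mult_mat_sum[OF M group_alg_mat_carrier] index_group_alg_mat)
  also have "\<dots> = (\<Sum>a<m. \<Sum>c<m. \<Sum>i\<in>I. M $$ (a,c) * (\<Sum>g\<in>carrier G. f i g * R g $$ (c,a)))"
    by (simp add: sum_distrib_left sum_distrib_right mult_ac sum.swap[of _ I])
  also have "\<dots> = (\<Sum>i\<in>I. \<Sum>a<m. \<Sum>c<m. M $$ (a,c) * (\<Sum>g\<in>carrier G. f i g * R g $$ (c,a)))"
    by (subst sum.swap, rule sum.cong[OF refl], rule sum.swap)
  also have "\<dots> = (\<Sum>i\<in>I. mat_trace (M * group_alg_mat G R m (f i)))"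
    using M by (simp add: mat_trace_def index_mult_mat_sum[OF M group_alg_mat_carrier] index_group_alg_mat)
  finally show ?thesis .
qed

context group
begin

lemma group_alg_mat_mult:
  assumes rep: "is_rep G m R"
  shows "group_alg_mat G R m f * group_alg_mat G R m f' =
    group_alg_mat G R m (\<lambda>x. \<Sum>y\<in>carrier G. f y * f' (inv y \<otimes> x))"
proof (rule eq_matI)
  fix a b assume "a < dim_row (group_alg_mat G R m (\<lambda>x. \<Sum>y\<in>carrier G. f y * f' (inv y \<otimes> x)))"
    "b < dim_col (group_alg_mat G R m (\<lambda>x. \<Sum>y\<in>carrier G. f y * f' (inv y \<otimes> x)))"
  then have a: "a < m" and b: "b < m" by auto
  have "(group_alg_mat G R m f * group_alg_mat G R m f') $$ (a,b) =
      (\<Sum>c<m. (\<Sum>y\<in>carrier G. f y * R y $$ (a,c)) * (\<Sum>z\<in>carrier G. f' z * R z $$ (c,b)))"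
    using a b by (simp add: index_group_alg_mat)
  also have "\<dots> = (\<Sum>c<m. \<Sum>y\<in>carrier G. \<Sum>z\<in>carrier G. f y * R y $$ (a,c) * (f' z * R z $$ (c,b)))"
    by (simp add: sum_product)
  also have "\<dots> = (\<Sum>y\<in>carrier G. \<Sum>z\<in>carrier G. \<Sum>c<m. f y * R y $$ (a,c) * (f' z * R z $$ (c,b)))"
    by (rule sum.swap[THEN trans], rule sum.cong[OF refl], rule sum.swap)
  also have "\<dots> = (\<Sum>y\<in>carrier G. \<Sum>z\<in>carrier G. f y * f' z * (\<Sum>c<m. R y $$ (a,c) * R z $$ (c,b)))"
    by (simp add: sum_distrib_left mult_ac)
  also have "\<dots> = (\<Sum>y\<in>carrier G. \<Sum>z\<in>carrier G. f y * f' z * R (y \<otimes> z) $$ (a,b))"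
    using rep_mult_index[OF rep _ _ a b] by simp
  also have "\<dots> = (\<Sum>y\<in>carrier G. \<Sum>x\<in>carrier G. f y * f' (inv y \<otimes> x) * R (y \<otimes> (inv y \<otimes> x)) $$ (a,b))"
    by (intro sum.cong refl sum_carrier_mult_left[symmetric]) simp
  also have "\<dots> = (\<Sum>y\<in>carrier G. \<Sum>x\<in>carrier G. f y * f' (inv y \<otimes> x) * R x $$ (a,b))"
    by (intro sum.cong refl) (simp add: inv_mult_cancel_left)
  also have "\<dots> = (\<Sum>x\<in>carrier G. (\<Sum>y\<in>carrier G. f y * f' (inv y \<otimes> x)) * R x $$ (a,b))"
    by (subst sum.swap) (simp add: sum_distrib_right)
  also have "\<dots> = group_alg_mat G R m (\<lambda>x. \<Sum>y\<in>carrier G. f y * f' (inv y \<otimes> x)) $$ (a,b)"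
    using a b by (simp add: index_group_alg_mat)
  finally show "(group_alg_mat G R m f * group_alg_mat G R m f') $$ (a,b) =
    group_alg_mat G R m (\<lambda>x. \<Sum>y\<in>carrier G. f y * f' (inv y \<otimes> x)) $$ (a,b)" .
qed auto

lemma rep_mult_group_alg_mat:
  assumes rep: "is_rep G m R" and h: "h \<in> carrier G"
  shows "R h * group_alg_mat G R m f = group_alg_mat G R m (\<lambda>x. f (inv h \<otimes> x))"
proof (rule eq_matI)
  fix a b assume "a < dim_row (group_alg_mat G R m (\<lambda>x. f (inv h \<otimes> x)))"
    "b < dim_col (group_alg_mat G R m (\<lambda>x. f (inv h \<otimes> x)))"
  then have a: "a < m" and b: "b < m" by auto
  have "(R h * group_alg_mat G R m f) $$ (a,b) = (\<Sum>c<m. R h $$ (a,c) * (\<Sum>y\<in>carrier G. f y * R y $$ (c,b)))"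
    using a b by (simp add: index_mult_mat_sum[OF rep_carrier[OF rep h] group_alg_mat_carrier] index_group_alg_mat)
  also have "\<dots> = (\<Sum>y\<in>carrier G. f y * R (h \<otimes> y) $$ (a,b))"
    unfolding sum_lessThan_mult_sum_left using rep_mult_index[OF rep h _ a b] by simp
  also have "\<dots> = (\<Sum>x\<in>carrier G. f (inv h \<otimes> x) * R (h \<otimes> (inv h \<otimes> x)) $$ (a,b))"
    using sum_carrier_mult_left[OF inv_closed[OF h], of "\<lambda>y. f y * R (h \<otimes> y) $$ (a,b)"] by simp
  also have "\<dots> = group_alg_mat G R m (\<lambda>x. f (inv h \<otimes> x)) $$ (a,b)"
    using a b h by (simp add: index_group_alg_mat inv_mult_cancel_left)
  finally show "(R h * group_alg_mat G R m f) $$ (a,b) = group_alg_mat G R m (\<lambda>x. f (inv h \<otimes> x)) $$ (a,b)" .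
qed (use rep_carrier[OF rep h] in auto)

lemma group_alg_mat_mult_rep:
  assumes rep: "is_rep G m R" and h: "h \<in> carrier G"
  shows "group_alg_mat G R m f * R h = group_alg_mat G R m (\<lambda>x. f (x \<otimes> inv h))"
proof (rule eq_matI)
  fix a b assume "a < dim_row (group_alg_mat G R m (\<lambda>x. f (x \<otimes> inv h)))"
    "b < dim_col (group_alg_mat G R m (\<lambda>x. f (x \<otimes> inv h)))"
  then have a: "a < m" and b: "b < m" by auto
  have "(group_alg_mat G R m f * R h) $$ (a,b) = (\<Sum>c<m. (\<Sum>y\<in>carrier G. f y * R y $$ (a,c)) * R h $$ (c,b))"
    using a b by (simp add: index_mult_mat_sum[OF group_alg_mat_carrier rep_carrier[OF rep h]] index_group_alg_mat)
  also have "\<dots> = (\<Sum>y\<in>carrier G. f y * R (y \<otimes> h) $$ (a,b))"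
    unfolding sum_lessThan_mult_sum_right using rep_mult_index[OF rep _ h a b] by simp
  also have "\<dots> = (\<Sum>x\<in>carrier G. f (x \<otimes> inv h) * R (x \<otimes> inv h \<otimes> h) $$ (a,b))"
    using sum_carrier_mult_right[OF inv_closed[OF h], of "\<lambda>y. f y * R (y \<otimes> h) $$ (a,b)"] by simp
  also have "\<dots> = group_alg_mat G R m (\<lambda>x. f (x \<otimes> inv h)) $$ (a,b)"
    using a b h by (simp add: index_group_alg_mat inv_mult_cancel_right)
  finally show "(group_alg_mat G R m f * R h) $$ (a,b) = group_alg_mat G R m (\<lambda>x. f (x \<otimes> inv h)) $$ (a,b)" .
qed (use rep_carrier[OF rep h] in auto)

lemma group_alg_mat_commute:
  assumes rep: "is_rep G m R" and M: "M \<in> carrier_mat m m"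
    and comm: "\<And>g. g \<in> carrier G \<Longrightarrow> M * R g = R g * M"
  shows "M * group_alg_mat G R m f = group_alg_mat G R m f * M"
proof (rule eq_matI)
  fix a b assume "a < dim_row (group_alg_mat G R m f * M)" "b < dim_col (group_alg_mat G R m f * M)"
  then have a: "a < m" and b: "b < m" using M by auto
  note R = rep_carrier[OF rep]
  have "(M * group_alg_mat G R m f) $$ (a,b) = (\<Sum>c<m. M $$ (a,c) * (\<Sum>y\<in>carrier G. f y * R y $$ (c,b)))"
    using a b by (simp add: index_mult_mat_sum[OF M group_alg_mat_carrier] index_group_alg_mat)
  also have "\<dots> = (\<Sum>y\<in>carrier G. f y * (M * R y) $$ (a,b))"
    unfolding sum_lessThan_mult_sum_left using a b by (intro sum.cong refl) (simp add: index_mult_mat_sum[OF M R])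
  also have "\<dots> = (\<Sum>y\<in>carrier G. f y * (R y * M) $$ (a,b))"
    using comm by simp
  also have "\<dots> = (\<Sum>c<m. (\<Sum>y\<in>carrier G. f y * R y $$ (a,c)) * M $$ (c,b))"
    unfolding sum_lessThan_mult_sum_right using a b by (intro sum.cong refl) (simp add: index_mult_mat_sum[OF R M])
  also have "\<dots> = (group_alg_mat G R m f * M) $$ (a,b)"
    using a b by (simp add: index_mult_mat_sum[OF group_alg_mat_carrier M] index_group_alg_mat)
  finally show "(M * group_alg_mat G R m f) $$ (a,b) = (group_alg_mat G R m f * M) $$ (a,b)" .
qed (use M in auto)

lemma group_alg_mat_intertwine:
  assumes rep: "is_rep G m R" and rep': "is_rep G k S" and P: "P \<in> carrier_mat m k"
    and intw: "\<And>g. g \<in> carrier G \<Longrightarrow> R g * P = P * S g"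
  shows "group_alg_mat G R m f * P = P * group_alg_mat G S k f"
proof (rule eq_matI)
  note R = rep_carrier[OF rep] and S = rep_carrier[OF rep']
  fix a b assume "a < dim_row (P * group_alg_mat G S k f)" "b < dim_col (P * group_alg_mat G S k f)"
  then have a: "a < m" and b: "b < k" using P by auto
  have "(group_alg_mat G R m f * P) $$ (a,b) = (\<Sum>c<m. (\<Sum>y\<in>carrier G. f y * R y $$ (a,c)) * P $$ (c,b))"
    using a b by (simp add: index_mult_mat_sum[OF group_alg_mat_carrier P] index_group_alg_mat)
  also have "\<dots> = (\<Sum>y\<in>carrier G. f y * (R y * P) $$ (a,b))"
    unfolding sum_lessThan_mult_sum_right using a b by (intro sum.cong refl) (simp add: index_mult_mat_sum[OF R P])
  also have "\<dots> = (\<Sum>y\<in>carrier G. f y * (P * S y) $$ (a,b))"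
    using intw by simp
  also have "\<dots> = (\<Sum>c<k. P $$ (a,c) * (\<Sum>y\<in>carrier G. f y * S y $$ (c,b)))"
    unfolding sum_lessThan_mult_sum_left using a b by (intro sum.cong refl) (simp add: index_mult_mat_sum[OF P S])
  also have "\<dots> = (P * group_alg_mat G S k f) $$ (a,b)"
    using a b by (simp add: index_mult_mat_sum[OF P group_alg_mat_carrier] index_group_alg_mat)
  finally show "(group_alg_mat G R m f * P) $$ (a,b) = (P * group_alg_mat G S k f) $$ (a,b)" .
qed (use P in auto)

end

section \<open>Irreducible representations of a direct product\<close>

text \<open>Let \<rho> be an irreducible representation of \<open>G \<times>\<times> H\<close> and \<sigma> an irreducible constituent of its
  restriction \<open>\<rho>\<^sub>G\<close> to G, embedded by P. By Schur orthogonality the images E i j of the matrix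
  coefficients of \<sigma> satisfy \<open>E i j * E k l = (if j = k then E i l else 0)\<close>, and \<open>Proj = \<Sum>i. E i i\<close>
  is a projection commuting with \<rho> and fixing the image of P, hence the identity. So H acts on the
  image U of E 0 0 by a representation \<tau>, and \<open>tr \<rho> (g,h) = tr \<sigma> g * tr \<tau> h\<close>; \<tau> is
  irreducible because a \<tau>-invariant subspace pulls back to a \<rho>-invariant one.\<close>

locale irrep_dirprod = G: group G + H: group H
  for G :: "('a,'b) monoid_scheme" and H :: "('c,'e) monoid_scheme" +
  fixes n :: nat and \<rho> :: "'a \<times> 'c \<Rightarrow> complex mat" and d :: nat and \<sigma> :: "'a \<Rightarrow> complex mat" and P :: "complex mat"
  assumes fin_G: "finite (carrier G)"
    and \<rho>_irr: "irreducible_rep (G \<times>\<times> H) n \<rho>"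
    and \<sigma>_irr: "irreducible_rep G d \<sigma>"
    and P: "P \<in> carrier_mat n d" and P_inj: "inj_mat P"
    and P_intertwines: "\<And>g. g \<in> carrier G \<Longrightarrow> \<rho> (g, \<one>\<^bsub>H\<^esub>) * P = P * \<sigma> g"
begin

definition \<rho>\<^sub>G where "\<rho>\<^sub>G g = \<rho> (g, \<one>\<^bsub>H\<^esub>)"
definition \<rho>\<^sub>H where "\<rho>\<^sub>H h = \<rho> (\<one>\<^bsub>G\<^esub>, h)"
definition \<kappa> :: complex where "\<kappa> = of_nat d / of_nat (card (carrier G))"
definition E where "E i j = group_alg_mat G \<rho>\<^sub>G n (\<lambda>g. \<kappa> * \<sigma> (inv\<^bsub>G\<^esub> g) $$ (j,i))"
definition \<chi> where "\<chi> g = (\<Sum>i<d. \<sigma> g $$ (i,i))"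
definition Proj where "Proj = group_alg_mat G \<rho>\<^sub>G n (\<lambda>g. \<kappa> * \<chi> (inv\<^bsub>G\<^esub> g))"

lemma \<rho>_rep: "is_rep (G \<times>\<times> H) n \<rho>" using \<rho>_irr by (simp add: irreducible_rep_def)
lemma \<sigma>_rep: "is_rep G d \<sigma>" using \<sigma>_irr by (simp add: irreducible_rep_def)
lemma d_pos: "d > 0" using \<sigma>_irr by (simp add: irreducible_rep_def)
lemma n_pos: "n > 0" using \<rho>_irr by (simp add: irreducible_rep_def)
lemma card_G_pos: "card (carrier G) > 0" using fin_G G.one_closed card_gt_0_iff by blast

lemma \<rho>_carrier: "g \<in> carrier G \<Longrightarrow> h \<in> carrier H \<Longrightarrow> \<rho> (g,h) \<in> carrier_mat n n"
  using \<rho>_rep by (simp add: is_rep_def)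
lemma \<rho>\<^sub>G_carrier[simp]: "g \<in> carrier G \<Longrightarrow> \<rho>\<^sub>G g \<in> carrier_mat n n" unfolding \<rho>\<^sub>G_def by (simp add: \<rho>_carrier)
lemma \<rho>\<^sub>H_carrier[simp]: "h \<in> carrier H \<Longrightarrow> \<rho>\<^sub>H h \<in> carrier_mat n n" unfolding \<rho>\<^sub>H_def by (simp add: \<rho>_carrier)
lemma \<sigma>_carrier[simp]: "g \<in> carrier G \<Longrightarrow> \<sigma> g \<in> carrier_mat d d" using \<sigma>_rep by (simp add: is_rep_def)
lemma \<rho>\<^sub>G_dim[simp]: "g \<in> carrier G \<Longrightarrow> dim_row (\<rho>\<^sub>G g) = n" "g \<in> carrier G \<Longrightarrow> dim_col (\<rho>\<^sub>G g) = n"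
  by (metis carrier_matD \<rho>\<^sub>G_carrier)+
lemma \<rho>\<^sub>H_dim[simp]: "h \<in> carrier H \<Longrightarrow> dim_row (\<rho>\<^sub>H h) = n" "h \<in> carrier H \<Longrightarrow> dim_col (\<rho>\<^sub>H h) = n"
  by (metis carrier_matD \<rho>\<^sub>H_carrier)+
lemma E_carrier[simp]: "E i j \<in> carrier_mat n n" by (simp add: E_def)
lemma Proj_carrier[simp]: "Proj \<in> carrier_mat n n" by (simp add: Proj_def)
lemma Proj_dim[simp]: "dim_row Proj = n" "dim_col Proj = n" by (simp_all add: Proj_def)
lemma E_dim[simp]: "dim_row (E i j) = n" "dim_col (E i j) = n" by (simp_all add: E_def)

lemma \<rho>_mult: "x \<in> carrier (G \<times>\<times> H) \<Longrightarrow> y \<in> carrier (G \<times>\<times> H) \<Longrightarrow> \<rho> (x \<otimes>\<^bsub>G \<times>\<times> H\<^esub> y) = \<rho> x * \<rho> y"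
  using \<rho>_rep unfolding is_rep_def by blast

lemma \<rho>\<^sub>G_rep: "is_rep G n \<rho>\<^sub>G"
  unfolding is_rep_def
proof (intro conjI ballI)
  show "\<rho>\<^sub>G \<one>\<^bsub>G\<^esub> = 1\<^sub>m n" using \<rho>_rep by (simp add: is_rep_def \<rho>\<^sub>G_def)
  fix x y assume x: "x \<in> carrier G" and y: "y \<in> carrier G"
  show "\<rho>\<^sub>G (x \<otimes>\<^bsub>G\<^esub> y) = \<rho>\<^sub>G x * \<rho>\<^sub>G y"
    using \<rho>_mult[of "(x, \<one>\<^bsub>H\<^esub>)" "(y, \<one>\<^bsub>H\<^esub>)"] x y by (simp add: \<rho>\<^sub>G_def)
qed simp

lemma \<rho>\<^sub>H_rep: "is_rep H n \<rho>\<^sub>H"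
  unfolding is_rep_def
proof (intro conjI ballI)
  show "\<rho>\<^sub>H \<one>\<^bsub>H\<^esub> = 1\<^sub>m n" using \<rho>_rep by (simp add: is_rep_def \<rho>\<^sub>H_def)
  fix x y assume x: "x \<in> carrier H" and y: "y \<in> carrier H"
  show "\<rho>\<^sub>H (x \<otimes>\<^bsub>H\<^esub> y) = \<rho>\<^sub>H x * \<rho>\<^sub>H y"
    using \<rho>_mult[of "(\<one>\<^bsub>G\<^esub>, x)" "(\<one>\<^bsub>G\<^esub>, y)"] x y by (simp add: \<rho>\<^sub>H_def)
qed simp

lemma \<rho>\<^sub>G_mult_\<rho>\<^sub>H: "g \<in> carrier G \<Longrightarrow> h \<in> carrier H \<Longrightarrow> \<rho>\<^sub>G g * \<rho>\<^sub>H h = \<rho> (g,h)"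
  using \<rho>_mult[of "(g, \<one>\<^bsub>H\<^esub>)" "(\<one>\<^bsub>G\<^esub>, h)"] by (simp add: \<rho>\<^sub>G_def \<rho>\<^sub>H_def)

lemma \<rho>\<^sub>H_mult_\<rho>\<^sub>G: "g \<in> carrier G \<Longrightarrow> h \<in> carrier H \<Longrightarrow> \<rho>\<^sub>H h * \<rho>\<^sub>G g = \<rho> (g,h)"
  using \<rho>_mult[of "(\<one>\<^bsub>G\<^esub>, h)" "(g, \<one>\<^bsub>H\<^esub>)"] by (simp add: \<rho>\<^sub>G_def \<rho>\<^sub>H_def)

lemma \<rho>\<^sub>H_commute_group_alg_mat: "h \<in> carrier H \<Longrightarrow> \<rho>\<^sub>H h * group_alg_mat G \<rho>\<^sub>G n f = group_alg_mat G \<rho>\<^sub>G n f * \<rho>\<^sub>H h"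
  by (rule G.group_alg_mat_commute[OF \<rho>\<^sub>G_rep \<rho>\<^sub>H_carrier]) (simp_all add: \<rho>\<^sub>G_mult_\<rho>\<^sub>H \<rho>\<^sub>H_mult_\<rho>\<^sub>G)

lemma E_mult:
  assumes "i < d" "j < d" "k < d" "l < d"
  shows "E i j * E k l = (if j = k then E i l else 0\<^sub>m n n)"
proof -
  have "E i j * E k l = group_alg_mat G \<rho>\<^sub>G n (\<lambda>x. \<Sum>y\<in>carrier G. \<kappa> * \<sigma> (inv\<^bsub>G\<^esub> y) $$ (j,i) * (\<kappa> * \<sigma> (inv\<^bsub>G\<^esub> (inv\<^bsub>G\<^esub> y \<otimes>\<^bsub>G\<^esub> x)) $$ (l,k)))"
    unfolding E_def by (rule G.group_alg_mat_mult[OF \<rho>\<^sub>G_rep])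
  also have "\<dots> = group_alg_mat G \<rho>\<^sub>G n (\<lambda>x. \<kappa> * \<kappa> * (if j = k then of_nat (card (carrier G)) / of_nat d * \<sigma> (inv\<^bsub>G\<^esub> x) $$ (l,i) else 0))"
    by (rule group_alg_mat_cong) (simp add: G.schur_orthogonality_convolution[OF \<sigma>_irr assms, symmetric] sum_distrib_left mult_ac)
  also have "\<dots> = (if j = k then E i l else 0\<^sub>m n n)"
    using d_pos card_G_pos by (auto simp: E_def \<kappa>_def group_alg_mat_zero intro!: group_alg_mat_cong)
  finally show ?thesis .
qed

lemma \<chi>_eq_trace: "g \<in> carrier G \<Longrightarrow> \<chi> g = mat_trace (\<sigma> g)"
  using carrier_matD(1)[OF \<sigma>_carrier] by (simp add: \<chi>_def mat_trace_def)

lemma \<chi>_commute: "a \<in> carrier G \<Longrightarrow> b \<in> carrier G \<Longrightarrow> \<chi> (a \<otimes>\<^bsub>G\<^esub> b) = \<chi> (b \<otimes>\<^bsub>G\<^esub> a)"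
  using \<sigma>_rep mat_trace_mult_comm[OF \<sigma>_carrier \<sigma>_carrier, of a b] by (simp add: \<chi>_eq_trace is_rep_def)

lemma Proj_commute_\<rho>\<^sub>G: "h \<in> carrier G \<Longrightarrow> Proj * \<rho>\<^sub>G h = \<rho>\<^sub>G h * Proj"
  unfolding Proj_def G.rep_mult_group_alg_mat[OF \<rho>\<^sub>G_rep] G.group_alg_mat_mult_rep[OF \<rho>\<^sub>G_rep]
  by (rule group_alg_mat_cong) (simp add: G.inv_mult_group \<chi>_commute)

lemma Proj_commute_\<rho>\<^sub>H: "h \<in> carrier H \<Longrightarrow> Proj * \<rho>\<^sub>H h = \<rho>\<^sub>H h * Proj"
  unfolding Proj_def by (simp add: \<rho>\<^sub>H_commute_group_alg_mat)

lemma Proj_idem: "Proj * Proj = Proj"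
proof -
  have "Proj * Proj = group_alg_mat G \<rho>\<^sub>G n (\<lambda>x. \<Sum>y\<in>carrier G. \<kappa> * \<chi> (inv\<^bsub>G\<^esub> y) * (\<kappa> * \<chi> (inv\<^bsub>G\<^esub> (inv\<^bsub>G\<^esub> y \<otimes>\<^bsub>G\<^esub> x))))"
    unfolding Proj_def by (rule G.group_alg_mat_mult[OF \<rho>\<^sub>G_rep])
  also have "\<dots> = Proj"
    unfolding Proj_def
  proof (rule group_alg_mat_cong)
    fix x assume x: "x \<in> carrier G"
    have "(\<Sum>y\<in>carrier G. \<kappa> * \<chi> (inv\<^bsub>G\<^esub> y) * (\<kappa> * \<chi> (inv\<^bsub>G\<^esub> (inv\<^bsub>G\<^esub> y \<otimes>\<^bsub>G\<^esub> x))))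
       = (\<Sum>y\<in>carrier G. \<kappa> * \<kappa> * ((\<Sum>i<d. \<sigma> (inv\<^bsub>G\<^esub> y) $$ (i,i)) * (\<Sum>j<d. \<sigma> (inv\<^bsub>G\<^esub> (inv\<^bsub>G\<^esub> y \<otimes>\<^bsub>G\<^esub> x)) $$ (j,j))))"
      by (rule sum.cong[OF refl]) (simp add: \<chi>_def mult_ac)
    also have "\<dots> = \<kappa> * \<kappa> * (\<Sum>y\<in>carrier G. (\<Sum>i<d. \<sigma> (inv\<^bsub>G\<^esub> y) $$ (i,i)) * (\<Sum>j<d. \<sigma> (inv\<^bsub>G\<^esub> (inv\<^bsub>G\<^esub> y \<otimes>\<^bsub>G\<^esub> x)) $$ (j,j)))"
      by (rule sum_distrib_left[symmetric])
    also have "\<dots> = \<kappa> * \<kappa> * (\<Sum>i<d. \<Sum>j<d. \<Sum>y\<in>carrier G. \<sigma> (inv\<^bsub>G\<^esub> y) $$ (i,i) * \<sigma> (inv\<^bsub>G\<^esub> (inv\<^bsub>G\<^esub> y \<otimes>\<^bsub>G\<^esub> x)) $$ (j,j))"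
      by (simp only: sum_product, subst sum.swap, rule arg_cong[where f="\<lambda>t. \<kappa> * \<kappa> * t"], rule sum.cong[OF refl], rule sum.swap)
    also have "\<dots> = \<kappa> * \<kappa> * (\<Sum>i<d. \<Sum>j<d. if i = j then of_nat (card (carrier G)) / of_nat d * \<sigma> (inv\<^bsub>G\<^esub> x) $$ (j,i) else 0)"
      using x by (simp add: G.schur_orthogonality_convolution[OF \<sigma>_irr])
    also have "\<dots> = \<kappa> * \<kappa> * (of_nat (card (carrier G)) / of_nat d) * \<chi> (inv\<^bsub>G\<^esub> x)"
      by (simp add: \<chi>_def sum_distrib_left sum_divide_distrib mult_ac)
    also have "\<dots> = \<kappa> * \<chi> (inv\<^bsub>G\<^esub> x)"
      using d_pos card_G_pos by (simp add: \<kappa>_def)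
    finally show "(\<Sum>y\<in>carrier G. \<kappa> * \<chi> (inv\<^bsub>G\<^esub> y) * (\<kappa> * \<chi> (inv\<^bsub>G\<^esub> (inv\<^bsub>G\<^esub> y \<otimes>\<^bsub>G\<^esub> x)))) = \<kappa> * \<chi> (inv\<^bsub>G\<^esub> x)" .
  qed
  finally show ?thesis .
qed

lemma group_alg_mat_\<sigma>_\<chi>: "group_alg_mat G \<sigma> d (\<lambda>g. \<kappa> * \<chi> (inv\<^bsub>G\<^esub> g)) = 1\<^sub>m d"
proof (rule eq_matI)
  fix a b assume "a < dim_row (1\<^sub>m d :: complex mat)" "b < dim_col (1\<^sub>m d :: complex mat)"
  then have a: "a < d" and b: "b < d" by auto
  have "group_alg_mat G \<sigma> d (\<lambda>g. \<kappa> * \<chi> (inv\<^bsub>G\<^esub> g)) $$ (a,b) =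
      \<kappa> * (\<Sum>i<d. \<Sum>g\<in>carrier G. \<sigma> g $$ (a,b) * \<sigma> (inv\<^bsub>G\<^esub> g) $$ (i,i))"
    using a b by (simp add: index_group_alg_mat \<chi>_def sum_distrib_left sum_distrib_right mult_ac sum.swap[of _ "carrier G"])
  also have "\<dots> = \<kappa> * (\<Sum>i<d. if a = i \<and> b = i then of_nat (card (carrier G)) / of_nat d else 0)"
    using a b by (simp add: G.schur_orthogonality[OF \<sigma>_irr])
  also have "\<dots> = (1\<^sub>m d :: complex mat) $$ (a,b)"
    using a b d_pos card_G_pos by (auto simp: \<kappa>_def)
  finally show "group_alg_mat G \<sigma> d (\<lambda>g. \<kappa> * \<chi> (inv\<^bsub>G\<^esub> g)) $$ (a,b) = (1\<^sub>m d :: complex mat) $$ (a,b)" .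
qed auto

lemma Proj_mult_P: "Proj * P = P"
proof -
  have "Proj * P = P * group_alg_mat G \<sigma> d (\<lambda>g. \<kappa> * \<chi> (inv\<^bsub>G\<^esub> g))"
    unfolding Proj_def by (rule G.group_alg_mat_intertwine[OF \<rho>\<^sub>G_rep \<sigma>_rep P]) (simp add: P_intertwines \<rho>\<^sub>G_def)
  then show ?thesis using P by (simp add: group_alg_mat_\<sigma>_\<chi>)
qed

lemma Proj_commute_\<rho>: "g \<in> carrier G \<Longrightarrow> h \<in> carrier H \<Longrightarrow> Proj * \<rho> (g,h) = \<rho> (g,h) * Proj"
proof -
  assume g: "g \<in> carrier G" and h: "h \<in> carrier H"
  have "Proj * \<rho> (g,h) = Proj * (\<rho>\<^sub>G g * \<rho>\<^sub>H h)" by (simp add: \<rho>\<^sub>G_mult_\<rho>\<^sub>H g h)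
  also have "\<dots> = (Proj * \<rho>\<^sub>G g) * \<rho>\<^sub>H h" using assoc_mult_mat[OF Proj_carrier \<rho>\<^sub>G_carrier[OF g] \<rho>\<^sub>H_carrier[OF h]] by simp
  also have "\<dots> = (\<rho>\<^sub>G g * Proj) * \<rho>\<^sub>H h" using Proj_commute_\<rho>\<^sub>G g by simp
  also have "\<dots> = \<rho>\<^sub>G g * (Proj * \<rho>\<^sub>H h)" using assoc_mult_mat[OF \<rho>\<^sub>G_carrier[OF g] Proj_carrier \<rho>\<^sub>H_carrier[OF h]] by simp
  also have "\<dots> = \<rho>\<^sub>G g * (\<rho>\<^sub>H h * Proj)" using Proj_commute_\<rho>\<^sub>H h by simp
  also have "\<dots> = (\<rho>\<^sub>G g * \<rho>\<^sub>H h) * Proj" using assoc_mult_mat[OF \<rho>\<^sub>G_carrier[OF g] \<rho>\<^sub>H_carrier[OF h] Proj_carrier] by simp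
  finally show ?thesis by (simp add: \<rho>\<^sub>G_mult_\<rho>\<^sub>H g h)
qed

lemma Proj_eq_one: "Proj = 1\<^sub>m n"
proof -
  define W where "W = (\<lambda>v. Proj *\<^sub>v v) ` carrier_vec n"
  have inv: "invariant_subspace (G \<times>\<times> H) n \<rho> W"
    unfolding W_def
  proof (rule invariant_subspace_mat_image[OF Proj_carrier \<rho>_rep])
    fix z assume "z \<in> carrier (G \<times>\<times> H)"
    then obtain g h where "z = (g,h)" "g \<in> carrier G" "h \<in> carrier H" by auto
    then show "\<exists>B\<in>carrier_mat n n. \<rho> z * Proj = Proj * B"
      using Proj_commute_\<rho> \<rho>_carrier by metis
  qed
  have "W \<noteq> {0\<^sub>v n}"
  proof
    assume W0: "W = {0\<^sub>v n}"
    define u where "u = P *\<^sub>v unit_vec d 0"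
    have "u \<noteq> 0\<^sub>v n"
    proof
      assume "u = 0\<^sub>v n"
      then have "P *\<^sub>v unit_vec d 0 = 0\<^sub>v n" by (simp add: u_def)
      then have "(unit_vec d 0 :: complex vec) = 0\<^sub>v d" using inj_matD[OF P_inj P unit_vec_carrier[of d 0]] by simp
      then show False using d_pos unit_vec_nonzero[of 0 d] by simp
    qed
    moreover have eu: "Proj *\<^sub>v u = u" unfolding u_def using Proj_mult_P assoc_mult_mat_vec[OF Proj_carrier P unit_vec_carrier[of d 0]]
      by simp
    moreover have uc: "u \<in> carrier_vec n" unfolding u_def using P by simp
    moreover have "u \<in> W" unfolding W_def by (rule image_eqI[of u "\<lambda>v. Proj *\<^sub>v v" u, OF eu[symmetric] uc])
    ultimately show False using W0 by simp
  qed
  moreover have "W = {0\<^sub>v n} \<or> W = carrier_vec n" using \<rho>_irr inv unfolding irreducible_rep_def by blast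
  ultimately have WW: "W = carrier_vec n" by simp
  have "Proj *\<^sub>v v = 1\<^sub>m n *\<^sub>v v" if v: "v \<in> carrier_vec n" for v
  proof -
    obtain w where w: "w \<in> carrier_vec n" "v = Proj *\<^sub>v w" using v WW unfolding W_def by auto
    have "Proj *\<^sub>v v = (Proj * Proj) *\<^sub>v w" using w assoc_mult_mat_vec[OF Proj_carrier Proj_carrier w(1)] by simp
    also have "\<dots> = v" using w Proj_idem by simp
    finally show ?thesis using v by simp
  qed
  then show ?thesis by (intro mat_eq_by_mult_vec[OF Proj_carrier]) auto
qed

lemma E_conj:
  assumes i: "i < d" and g: "g \<in> carrier G"
  shows "E 0 i * (\<rho>\<^sub>G g * E i 0) = \<sigma> g $$ (i,i) \<cdot>\<^sub>m E 0 0"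
proof -
  have "\<rho>\<^sub>G g * E i 0 = group_alg_mat G \<rho>\<^sub>G n (\<lambda>x. \<kappa> * \<sigma> (inv\<^bsub>G\<^esub> (inv\<^bsub>G\<^esub> g \<otimes>\<^bsub>G\<^esub> x)) $$ (0,i))"
    unfolding E_def by (rule G.rep_mult_group_alg_mat[OF \<rho>\<^sub>G_rep g])
  then have "E 0 i * (\<rho>\<^sub>G g * E i 0) = group_alg_mat G \<rho>\<^sub>G n (\<lambda>x. \<Sum>y\<in>carrier G. \<kappa> * \<sigma> (inv\<^bsub>G\<^esub> y) $$ (i,0) *
      (\<kappa> * \<sigma> (inv\<^bsub>G\<^esub> (inv\<^bsub>G\<^esub> g \<otimes>\<^bsub>G\<^esub> (inv\<^bsub>G\<^esub> y \<otimes>\<^bsub>G\<^esub> x))) $$ (0,i)))"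
    unfolding E_def[of 0 i] by (simp add: G.group_alg_mat_mult[OF \<rho>\<^sub>G_rep])
  also have "\<dots> = group_alg_mat G \<rho>\<^sub>G n (\<lambda>x. \<sigma> g $$ (i,i) * (\<kappa> * \<sigma> (inv\<^bsub>G\<^esub> x) $$ (0,0)))"
  proof (rule group_alg_mat_cong)
    fix x assume x: "x \<in> carrier G"
    have "(\<Sum>y\<in>carrier G. \<kappa> * \<sigma> (inv\<^bsub>G\<^esub> y) $$ (i,0) *
      (\<kappa> * \<sigma> (inv\<^bsub>G\<^esub> (inv\<^bsub>G\<^esub> g \<otimes>\<^bsub>G\<^esub> (inv\<^bsub>G\<^esub> y \<otimes>\<^bsub>G\<^esub> x))) $$ (0,i))) =
      (\<Sum>y\<in>carrier G. \<kappa> * \<sigma> (inv\<^bsub>G\<^esub> y) $$ (i,0) *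
      (\<kappa> * (\<Sum>q<d. \<sigma> (inv\<^bsub>G\<^esub> (inv\<^bsub>G\<^esub> y \<otimes>\<^bsub>G\<^esub> x)) $$ (0,q) * \<sigma> g $$ (q,i))))"
    proof (rule sum.cong[OF refl])
      fix y assume y: "y \<in> carrier G"
      have "inv\<^bsub>G\<^esub> (inv\<^bsub>G\<^esub> g \<otimes>\<^bsub>G\<^esub> (inv\<^bsub>G\<^esub> y \<otimes>\<^bsub>G\<^esub> x)) = inv\<^bsub>G\<^esub> (inv\<^bsub>G\<^esub> y \<otimes>\<^bsub>G\<^esub> x) \<otimes>\<^bsub>G\<^esub> g"
        using x y g by (simp add: G.inv_mult_group)
      then show "\<kappa> * \<sigma> (inv\<^bsub>G\<^esub> y) $$ (i,0) * (\<kappa> * \<sigma> (inv\<^bsub>G\<^esub> (inv\<^bsub>G\<^esub> g \<otimes>\<^bsub>G\<^esub> (inv\<^bsub>G\<^esub> y \<otimes>\<^bsub>G\<^esub> x))) $$ (0,i)) =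
        \<kappa> * \<sigma> (inv\<^bsub>G\<^esub> y) $$ (i,0) * (\<kappa> * (\<Sum>q<d. \<sigma> (inv\<^bsub>G\<^esub> (inv\<^bsub>G\<^esub> y \<otimes>\<^bsub>G\<^esub> x)) $$ (0,q) * \<sigma> g $$ (q,i)))"
        using rep_mult_index[OF \<sigma>_rep _ g _ i, of "inv\<^bsub>G\<^esub> (inv\<^bsub>G\<^esub> y \<otimes>\<^bsub>G\<^esub> x)" 0] x y g d_pos by simp
    qed
    also have "\<dots> = \<kappa> * \<kappa> * (\<Sum>q<d. \<sigma> g $$ (q,i) * (\<Sum>y\<in>carrier G. \<sigma> (inv\<^bsub>G\<^esub> y) $$ (i,0) * \<sigma> (inv\<^bsub>G\<^esub> (inv\<^bsub>G\<^esub> y \<otimes>\<^bsub>G\<^esub> x)) $$ (0,q)))"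
      by (simp add: sum_distrib_left mult_ac, rule sum.swap)
    also have "\<dots> = \<kappa> * \<kappa> * (\<Sum>q<d. \<sigma> g $$ (q,i) * (if i = q then of_nat (card (carrier G)) / of_nat d * \<sigma> (inv\<^bsub>G\<^esub> x) $$ (0,0) else 0))"
      using i d_pos x by (simp add: G.schur_orthogonality_convolution[OF \<sigma>_irr])
    also have "\<dots> = \<kappa> * \<kappa> * (\<sigma> g $$ (i,i) * (of_nat (card (carrier G)) / of_nat d * \<sigma> (inv\<^bsub>G\<^esub> x) $$ (0,0)))"
      using i by (simp add: if_distrib[of "\<lambda>t. _ * t"] cong: if_cong)
    also have "\<dots> = \<sigma> g $$ (i,i) * (\<kappa> * \<sigma> (inv\<^bsub>G\<^esub> x) $$ (0,0))"
      using d_pos card_G_pos by (simp add: \<kappa>_def)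
    finally show "(\<Sum>y\<in>carrier G. \<kappa> * \<sigma> (inv\<^bsub>G\<^esub> y) $$ (i,0) *
      (\<kappa> * \<sigma> (inv\<^bsub>G\<^esub> (inv\<^bsub>G\<^esub> g \<otimes>\<^bsub>G\<^esub> (inv\<^bsub>G\<^esub> y \<otimes>\<^bsub>G\<^esub> x))) $$ (0,i))) =
      \<sigma> g $$ (i,i) * (\<kappa> * \<sigma> (inv\<^bsub>G\<^esub> x) $$ (0,0))" .
  qed
  also have "\<dots> = \<sigma> g $$ (i,i) \<cdot>\<^sub>m E 0 0"
    unfolding E_def by (rule group_alg_mat_smult)
  finally show ?thesis .
qed

lemma Proj_eq_sum_E: "Proj = group_alg_mat G \<rho>\<^sub>G n (\<lambda>x. \<Sum>i<d. \<kappa> * \<sigma> (inv\<^bsub>G\<^esub> x) $$ (i,i))"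
  unfolding Proj_def \<chi>_def by (simp add: sum_distrib_left)

lemma \<rho>\<^sub>H_E_commute: assumes h: "h \<in> carrier H" and M: "dim_row M = n"
  shows "\<rho>\<^sub>H h * (E i j * M) = E i j * (\<rho>\<^sub>H h * M)"
proof -
  have "\<rho>\<^sub>H h * (E i j * M) = (\<rho>\<^sub>H h * E i j) * M" using h M by simp
  also have "\<dots> = (E i j * \<rho>\<^sub>H h) * M" unfolding E_def using \<rho>\<^sub>H_commute_group_alg_mat[OF h] by simp
  also have "\<dots> = E i j * (\<rho>\<^sub>H h * M)" using h M by simp
  finally show ?thesis .
qed

lemma trace_formula:
  assumes g: "g \<in> carrier G" and h: "h \<in> carrier H"
  shows "mat_trace (\<rho> (g,h)) = \<chi> g * mat_trace (\<rho>\<^sub>H h * E 0 0)"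
proof -
  have \<rho>H_h: "\<rho>\<^sub>H h \<in> carrier_mat n n" using h by simp
  have \<rho>G_g: "\<rho>\<^sub>G g \<in> carrier_mat n n" using g by simp
  have "mat_trace (\<rho> (g,h)) = mat_trace (\<rho> (g,h) * Proj)" using \<rho>_carrier[OF g h] by (simp add: Proj_eq_one)
  also have "\<dots> = (\<Sum>i<d. mat_trace (\<rho> (g,h) * E i i))"
    unfolding Proj_eq_sum_E E_def by (rule mat_trace_mult_group_alg_mat_sum[OF \<rho>_carrier[OF g h]]) simp
  also have "\<dots> = (\<Sum>i<d. \<sigma> g $$ (i,i) * mat_trace (\<rho>\<^sub>H h * E 0 0))"
  proof (rule sum.cong[OF refl])
    fix i assume "i \<in> {..<d}" then have i: "i < d" by simp
    txt \<open>Write E i i = E i 0 * E 0 0 * E 0 i and move E 0 i around the trace.\<close>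
    have "E i i = E i 0 * (E 0 0 * E 0 i)" using i d_pos by (simp add: E_mult)
    then have "mat_trace (\<rho> (g,h) * E i i) = mat_trace (\<rho>\<^sub>G g * (\<rho>\<^sub>H h * (E i 0 * (E 0 0 * E 0 i))))"
      using g h by (simp add: \<rho>\<^sub>G_mult_\<rho>\<^sub>H[symmetric])
    also have "\<dots> = mat_trace ((\<rho>\<^sub>G g * (\<rho>\<^sub>H h * (E i 0 * E 0 0))) * E 0 i)"
      using \<rho>G_g \<rho>H_h by simp
    also have "\<dots> = mat_trace (E 0 i * (\<rho>\<^sub>G g * (\<rho>\<^sub>H h * (E i 0 * E 0 0))))"
      by (rule mat_trace_mult_comm[of _ n n]) (use g h in \<open>auto intro!: carrier_matI\<close>)
    also have "\<rho>\<^sub>H h * (E i 0 * E 0 0) = E i 0 * (\<rho>\<^sub>H h * E 0 0)"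
      by (rule \<rho>\<^sub>H_E_commute[OF h]) simp
    also have "E 0 i * (\<rho>\<^sub>G g * (E i 0 * (\<rho>\<^sub>H h * E 0 0))) = (E 0 i * (\<rho>\<^sub>G g * E i 0)) * (\<rho>\<^sub>H h * E 0 0)"
      using \<rho>G_g \<rho>H_h by simp
    also have "\<dots> = \<sigma> g $$ (i,i) \<cdot>\<^sub>m (E 0 0 * (\<rho>\<^sub>H h * E 0 0))"
      using E_conj[OF i g] mult_smult_assoc_mat[OF E_carrier mult_carrier_mat[OF \<rho>H_h E_carrier]] by simp
    also have "mat_trace \<dots> = \<sigma> g $$ (i,i) * mat_trace (E 0 0 * (\<rho>\<^sub>H h * E 0 0))"
      by (rule mat_trace_smult[of _ n]) (use h in \<open>auto intro!: carrier_matI\<close>)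
    also have "mat_trace (E 0 0 * (\<rho>\<^sub>H h * E 0 0)) = mat_trace ((\<rho>\<^sub>H h * E 0 0) * E 0 0)"
      by (rule mat_trace_mult_comm[of _ n n]) (use g h in \<open>auto intro!: carrier_matI\<close>)
    also have "\<dots> = mat_trace (\<rho>\<^sub>H h * E 0 0)"
      using \<rho>H_h d_pos by (simp add: E_mult)
    finally show "mat_trace (\<rho> (g,h) * E i i) = \<sigma> g $$ (i,i) * mat_trace (\<rho>\<^sub>H h * E 0 0)" .
  qed
  also have "\<dots> = \<chi> g * mat_trace (\<rho>\<^sub>H h * E 0 0)"
    by (simp add: \<chi>_def sum_distrib_right)
  finally show ?thesis .
qed

lemma E00_idem: "E 0 0 * E 0 0 = E 0 0" using d_pos by (simp add: E_mult)

definition U where "U = (\<lambda>v. E 0 0 *\<^sub>v v) ` carrier_vec n"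

lemma U_subspace: "subspace_vec n U"
  unfolding U_def by (rule subspace_vec_mat_image[OF E_carrier])

lemma U_fix: "w \<in> U \<Longrightarrow> E 0 0 *\<^sub>v w = w"
proof -
  assume "w \<in> U"
  then obtain u where u: "u \<in> carrier_vec n" "w = E 0 0 *\<^sub>v u" unfolding U_def by auto
  then show ?thesis using assoc_mult_mat_vec[OF E_carrier E_carrier u(1), of 0 0 0 0] E00_idem by simp
qed

definition m where
  "m = (SOME m. \<exists>Q. Q \<in> carrier_mat n m \<and> inj_mat Q \<and> (\<lambda>v. Q *\<^sub>v v) ` carrier_vec m = U)"

definition Q where
  "Q = (SOME Q. Q \<in> carrier_mat n m \<and> inj_mat Q \<and> (\<lambda>v. Q *\<^sub>v v) ` carrier_vec m = U)"

lemma Q_props: "Q \<in> carrier_mat n m \<and> inj_mat Q \<and> (\<lambda>v. Q *\<^sub>v v) ` carrier_vec m = U"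
proof -
  have "\<exists>Q. Q \<in> carrier_mat n m \<and> inj_mat Q \<and> (\<lambda>v. Q *\<^sub>v v) ` carrier_vec m = U"
    unfolding m_def by (rule someI_ex) (rule subspace_vec_basis[OF U_subspace])
  then show ?thesis unfolding Q_def by (rule someI_ex)
qed

lemma Q_carrier[simp]: "Q \<in> carrier_mat n m" using Q_props by simp
lemma Q_dim[simp]: "dim_row Q = n" "dim_col Q = m" using carrier_matD[OF Q_carrier] by auto
lemma Q_inj: "inj_mat Q" using Q_props by simp
lemma Q_U: "v \<in> carrier_vec m \<Longrightarrow> Q *\<^sub>v v \<in> U" using Q_props by blast
lemma U_Q: "w \<in> U \<Longrightarrow> \<exists>v\<in>carrier_vec m. Q *\<^sub>v v = w" using Q_props by (metis imageE)

lemma E00_Q: "E 0 0 * Q = Q"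
  by (rule mat_eq_by_mult_vec[of _ n m]) (auto simp: assoc_mult_mat_vec[OF E_carrier Q_carrier] U_fix Q_U)

definition L where "L = (SOME N. N \<in> carrier_mat m n \<and> Q * N = E 0 0)"

lemma L_props: "L \<in> carrier_mat m n \<and> Q * L = E 0 0"
proof -
  have "\<exists>N\<in>carrier_mat m n. Q * N = E 0 0"
  proof (rule mat_factor_through_cols[OF Q_carrier E_carrier])
    fix j assume j: "j < n"
    have "col (E 0 0) j = E 0 0 *\<^sub>v unit_vec n j"
      using j by (intro eq_vecI) (simp_all add: index_mult_mat_unit_vec[OF E_carrier])
    then have "col (E 0 0) j \<in> U" unfolding U_def by auto
    then show "\<exists>v\<in>carrier_vec m. Q *\<^sub>v v = col (E 0 0) j" using U_Q by blast
  qed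
  then show ?thesis unfolding L_def by (metis (mono_tags, lifting) someI_ex)
qed

lemma L_carrier[simp]: "L \<in> carrier_mat m n" using L_props by simp
lemma L_dim[simp]: "dim_row L = m" "dim_col L = n" using carrier_matD[OF L_carrier] by auto
lemma Q_L: "Q * L = E 0 0" using L_props by simp

lemma L_Q: "L * Q = 1\<^sub>m m"
proof (rule inj_mat_cancel[OF Q_carrier Q_inj])
  have "Q * (L * Q) = (Q * L) * Q" by simp
  also have "\<dots> = Q" by (simp add: Q_L E00_Q)
  finally show "Q * (L * Q) = Q * 1\<^sub>m m" by simp
qed auto

definition \<tau> where "\<tau> h = L * (\<rho>\<^sub>H h * Q)"

lemma \<tau>_dim[simp]: "dim_row (\<tau> h) = m" "dim_col (\<tau> h) = m" by (simp_all add: \<tau>_def)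

lemma \<tau>_carrier[simp]: "h \<in> carrier H \<Longrightarrow> \<tau> h \<in> carrier_mat m m"
  unfolding \<tau>_def by (auto intro!: carrier_matI)

lemma \<rho>\<^sub>H_Q: "h \<in> carrier H \<Longrightarrow> \<rho>\<^sub>H h * Q = Q * \<tau> h"
proof -
  assume h: "h \<in> carrier H"
  have "Q * \<tau> h = (Q * L) * (\<rho>\<^sub>H h * Q)" unfolding \<tau>_def using h by simp
  also have "\<dots> = E 0 0 * (\<rho>\<^sub>H h * Q)" by (simp add: Q_L)
  also have "\<dots> = \<rho>\<^sub>H h * (E 0 0 * Q)" using \<rho>\<^sub>H_E_commute[OF h, of Q 0 0] by simp
  also have "\<dots> = \<rho>\<^sub>H h * Q" by (simp add: E00_Q)
  finally show ?thesis by simp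
qed

lemma \<tau>_rep: "is_rep H m \<tau>"
  unfolding is_rep_def
proof (intro conjI ballI)
  show "\<tau> h \<in> carrier_mat m m" if "h \<in> carrier H" for h using that by simp
  show "\<tau> \<one>\<^bsub>H\<^esub> = 1\<^sub>m m" using \<rho>\<^sub>H_rep L_Q unfolding \<tau>_def is_rep_def by simp
  fix x y assume x: "x \<in> carrier H" and y: "y \<in> carrier H"
  have "\<tau> (x \<otimes>\<^bsub>H\<^esub> y) = L * (\<rho>\<^sub>H x * (\<rho>\<^sub>H y * Q))"
    unfolding \<tau>_def using \<rho>\<^sub>H_rep x y unfolding is_rep_def by simp
  also have "\<dots> = L * (\<rho>\<^sub>H x * (Q * \<tau> y))" by (simp add: \<rho>\<^sub>H_Q y)
  also have "\<dots> = (L * (\<rho>\<^sub>H x * Q)) * \<tau> y" using x y by simp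
  finally show "\<tau> (x \<otimes>\<^bsub>H\<^esub> y) = \<tau> x * \<tau> y" unfolding \<tau>_def .
qed

lemma mat_trace_\<tau>: "h \<in> carrier H \<Longrightarrow> mat_trace (\<rho>\<^sub>H h * E 0 0) = mat_trace (\<tau> h)"
proof -
  assume h: "h \<in> carrier H"
  have "mat_trace (\<rho>\<^sub>H h * E 0 0) = mat_trace ((\<rho>\<^sub>H h * Q) * L)" using h by (simp add: Q_L)
  also have "\<dots> = mat_trace (L * (\<rho>\<^sub>H h * Q))"
    by (rule mat_trace_mult_comm[of _ n m]) (use h in \<open>auto intro!: carrier_matI\<close>)
  finally show ?thesis by (simp add: \<tau>_def)
qed

lemma m_pos: "m > 0"
proof -
  have "mat_trace (\<rho> (\<one>\<^bsub>G\<^esub>, \<one>\<^bsub>H\<^esub>)) = \<chi> \<one>\<^bsub>G\<^esub> * mat_trace (\<rho>\<^sub>H \<one>\<^bsub>H\<^esub> * E 0 0)"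
    by (rule trace_formula) simp_all
  moreover have "\<rho> (\<one>\<^bsub>G\<^esub>, \<one>\<^bsub>H\<^esub>) = 1\<^sub>m n" using \<rho>_rep by (simp add: is_rep_def)
  moreover have "\<chi> \<one>\<^bsub>G\<^esub> = of_nat d" using \<sigma>_rep by (simp add: \<chi>_eq_trace is_rep_def)
  moreover have "mat_trace (\<rho>\<^sub>H \<one>\<^bsub>H\<^esub> * E 0 0) = of_nat m"
    using mat_trace_\<tau>[of "\<one>\<^bsub>H\<^esub>"] \<tau>_rep by (simp add: is_rep_def)
  ultimately have "(of_nat n :: complex) = of_nat d * of_nat m" by simp
  then have "n = d * m" by (metis of_nat_eq_iff of_nat_mult)
  then show ?thesis using n_pos by (cases m) auto
qed

definition coord where "coord g = L * (E 0 0 * \<rho>\<^sub>G g)"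

lemma coord_dim[simp]: "g \<in> carrier G \<Longrightarrow> dim_row (coord g) = m" "g \<in> carrier G \<Longrightarrow> dim_col (coord g) = n"
  by (simp_all add: coord_def)
lemma coord_carrier[simp]: "g \<in> carrier G \<Longrightarrow> coord g \<in> carrier_mat m n"
  by (auto intro!: carrier_matI)

lemma Q_L_E00: "dim_row M = n \<Longrightarrow> Q * (L * (E 0 0 * M)) = E 0 0 * M"
proof -
  assume M: "dim_row M = n"
  have "Q * (L * (E 0 0 * M)) = (Q * L) * (E 0 0 * M)" using M by simp
  also have "\<dots> = E 0 0 * (E 0 0 * M)" by (simp add: Q_L)
  also have "\<dots> = (E 0 0 * E 0 0) * M" using M by simp
  finally show ?thesis by (simp add: E00_idem)
qed

lemma coord_mult_\<rho>: assumes g: "g \<in> carrier G" and g': "g' \<in> carrier G" and h: "h \<in> carrier H"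
  shows "coord g * \<rho> (g',h) = \<tau> h * coord (g \<otimes>\<^bsub>G\<^esub> g')"
proof -
  have gg': "g \<otimes>\<^bsub>G\<^esub> g' \<in> carrier G" using g g' by simp
  have "coord g * \<rho> (g',h) = L * (E 0 0 * (\<rho>\<^sub>G g * (\<rho>\<^sub>G g' * \<rho>\<^sub>H h)))" unfolding coord_def using g g' h by (simp add: \<rho>\<^sub>G_mult_\<rho>\<^sub>H[symmetric])
  also have "\<rho>\<^sub>G g * (\<rho>\<^sub>G g' * \<rho>\<^sub>H h) = \<rho>\<^sub>G (g \<otimes>\<^bsub>G\<^esub> g') * \<rho>\<^sub>H h"
    using \<rho>\<^sub>G_rep g g' h unfolding is_rep_def by simp
  also have "\<dots> = \<rho>\<^sub>H h * \<rho>\<^sub>G (g \<otimes>\<^bsub>G\<^esub> g')" using gg' h by (simp add: \<rho>\<^sub>G_mult_\<rho>\<^sub>H \<rho>\<^sub>H_mult_\<rho>\<^sub>G)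
  also have "E 0 0 * (\<rho>\<^sub>H h * \<rho>\<^sub>G (g \<otimes>\<^bsub>G\<^esub> g')) = \<rho>\<^sub>H h * (E 0 0 * \<rho>\<^sub>G (g \<otimes>\<^bsub>G\<^esub> g'))"
    using \<rho>\<^sub>H_E_commute[OF h, of "\<rho>\<^sub>G (g \<otimes>\<^bsub>G\<^esub> g')" 0 0] gg' by simp
  also have "\<dots> = \<rho>\<^sub>H h * (Q * (L * (E 0 0 * \<rho>\<^sub>G (g \<otimes>\<^bsub>G\<^esub> g'))))" using Q_L_E00 gg' by simp
  also have "L * \<dots> = \<tau> h * coord (g \<otimes>\<^bsub>G\<^esub> g')" unfolding \<tau>_def coord_def using gg' h by simp
  finally show ?thesis .
qed

lemma coord_mult_Q: assumes g: "g \<in> carrier G"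
  shows "coord g * Q = \<sigma> g $$ (0,0) \<cdot>\<^sub>m 1\<^sub>m m"
proof -
  have "coord g * Q = L * (E 0 0 * (\<rho>\<^sub>G g * (E 0 0 * Q)))" unfolding coord_def using g by (simp add: E00_Q)
  also have "\<dots> = L * ((E 0 0 * (\<rho>\<^sub>G g * E 0 0)) * Q)" using g by simp
  also have "\<dots> = L * ((\<sigma> g $$ (0,0) \<cdot>\<^sub>m E 0 0) * Q)" using E_conj[OF d_pos g] by simp
  also have "\<dots> = \<sigma> g $$ (0,0) \<cdot>\<^sub>m (L * (E 0 0 * Q))"
    by (simp add: mult_smult_assoc_mat[OF E_carrier Q_carrier] mult_smult_distrib[OF L_carrier mult_carrier_mat[OF E_carrier Q_carrier]])
  finally show ?thesis by (simp add: E00_Q L_Q)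
qed

lemma coord_one_mult_Q: "coord \<one>\<^bsub>G\<^esub> * Q = 1\<^sub>m m"
  using coord_mult_Q[OF G.one_closed] rep_one[OF \<sigma>_rep] d_pos by (auto intro!: eq_matI)

definition coord_preimage where
  "coord_preimage W = {v \<in> carrier_vec n. \<forall>g\<in>carrier G. coord g *\<^sub>v v \<in> W}"

lemma invariant_subspace_coord_preimage:
  assumes W: "invariant_subspace H m \<tau> W"
  shows "invariant_subspace (G \<times>\<times> H) n \<rho> (coord_preimage W)"
proof -
  from W have W_zero: "0\<^sub>v m \<in> W"
    and W_add: "\<And>v w. v \<in> W \<Longrightarrow> w \<in> W \<Longrightarrow> v + w \<in> W"
    and W_smult: "\<And>c v. v \<in> W \<Longrightarrow> c \<cdot>\<^sub>v v \<in> W"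
    and W_\<tau>: "\<And>h v. h \<in> carrier H \<Longrightarrow> v \<in> W \<Longrightarrow> \<tau> h *\<^sub>v v \<in> W"
    unfolding invariant_subspace_def by auto
  show ?thesis
    unfolding invariant_subspace_def
  proof (intro conjI ballI allI)
    show "coord_preimage W \<subseteq> carrier_vec n" unfolding coord_preimage_def by auto
    have "coord g *\<^sub>v 0\<^sub>v n = 0\<^sub>v m" if "g \<in> carrier G" for g
      using that by (intro eq_vecI) (auto simp: scalar_prod_def)
    then show "0\<^sub>v n \<in> coord_preimage W" unfolding coord_preimage_def using W_zero by auto
  next
    fix v w assume "v \<in> coord_preimage W" "w \<in> coord_preimage W"
    then show "v + w \<in> coord_preimage W" unfolding coord_preimage_def using W_add
      by (auto simp: mult_add_distrib_mat_vec[OF coord_carrier])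
  next
    fix c v assume "v \<in> coord_preimage W"
    then show "c \<cdot>\<^sub>v v \<in> coord_preimage W" unfolding coord_preimage_def using W_smult
      by (auto simp: mult_mat_vec[OF coord_carrier])
  next
    fix z v assume z: "z \<in> carrier (G \<times>\<times> H)" and v: "v \<in> coord_preimage W"
    obtain g' h where gh: "z = (g',h)" "g' \<in> carrier G" "h \<in> carrier H" using z by auto
    have vc: "v \<in> carrier_vec n" using v unfolding coord_preimage_def by auto
    have "coord g *\<^sub>v (\<rho> (g',h) *\<^sub>v v) \<in> W" if g: "g \<in> carrier G" for g
    proof -
      have gg': "g \<otimes>\<^bsub>G\<^esub> g' \<in> carrier G" using g gh by simp
      have "coord g *\<^sub>v (\<rho> (g',h) *\<^sub>v v) = (coord g * \<rho> (g',h)) *\<^sub>v v"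
        using assoc_mult_mat_vec[OF coord_carrier[OF g] \<rho>_carrier[OF gh(2,3)] vc] by simp
      also have "\<dots> = \<tau> h *\<^sub>v (coord (g \<otimes>\<^bsub>G\<^esub> g') *\<^sub>v v)"
        using coord_mult_\<rho>[OF g gh(2,3)] assoc_mult_mat_vec[OF \<tau>_carrier[OF gh(3)] coord_carrier[OF gg'] vc] by simp
      finally show ?thesis using W_\<tau>[OF gh(3)] v gg' unfolding coord_preimage_def by simp
    qed
    then show "\<rho> z *\<^sub>v v \<in> coord_preimage W"
      unfolding coord_preimage_def using gh vc mult_mat_vec_carrier[OF \<rho>_carrier[OF gh(2,3)] vc] by auto
  qed
qed

lemma Q_mult_in_coord_preimage:
  assumes W: "invariant_subspace H m \<tau> W" and x: "x \<in> W"
  shows "Q *\<^sub>v x \<in> coord_preimage W"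
proof -
  have xc: "x \<in> carrier_vec m" and W_smult: "\<And>c. c \<cdot>\<^sub>v x \<in> W"
    using W x unfolding invariant_subspace_def by auto
  have "coord g *\<^sub>v (Q *\<^sub>v x) \<in> W" if g: "g \<in> carrier G" for g
  proof -
    have "coord g *\<^sub>v (Q *\<^sub>v x) = (coord g * Q) *\<^sub>v x"
      using assoc_mult_mat_vec[OF coord_carrier[OF g] Q_carrier xc] by simp
    also have "\<dots> = \<sigma> g $$ (0,0) \<cdot>\<^sub>v x" using coord_mult_Q[OF g] xc by (simp add: smult_one_mult_vec)
    finally show ?thesis using W_smult by simp
  qed
  then show ?thesis unfolding coord_preimage_def using mult_mat_vec_carrier[OF Q_carrier xc] by auto
qed

lemma \<tau>_irr: "irreducible_rep H m \<tau>"
  unfolding irreducible_rep_def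
proof (intro conjI m_pos \<tau>_rep allI impI)
  fix W assume W: "invariant_subspace H m \<tau> W"
  then have W_carrier: "W \<subseteq> carrier_vec m" and W_zero: "0\<^sub>v m \<in> W"
    unfolding invariant_subspace_def by auto
  have "coord_preimage W = {0\<^sub>v n} \<or> coord_preimage W = carrier_vec n"
    by (rule irreducible_repD[OF \<rho>_irr invariant_subspace_coord_preimage[OF W]])
  then show "W = {0\<^sub>v m} \<or> W = carrier_vec m"
  proof
    assume zero: "coord_preimage W = {0\<^sub>v n}"
    have "W \<subseteq> {0\<^sub>v m}"
    proof
      fix x assume x: "x \<in> W"
      then have "Q *\<^sub>v x = 0\<^sub>v n" using Q_mult_in_coord_preimage[OF W x] zero by simp
      moreover have "x \<in> carrier_vec m" using W_carrier x by blast
      ultimately show "x \<in> {0\<^sub>v m}" using inj_matD[OF Q_inj Q_carrier] by simp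
    qed
    then show ?thesis using W_zero by blast
  next
    assume full: "coord_preimage W = carrier_vec n"
    have "y \<in> W" if y: "y \<in> carrier_vec m" for y
    proof -
      have "Q *\<^sub>v y \<in> coord_preimage W" using full mult_mat_vec_carrier[OF Q_carrier y] by simp
      then have "coord \<one>\<^bsub>G\<^esub> *\<^sub>v (Q *\<^sub>v y) \<in> W"
        unfolding coord_preimage_def by blast
      moreover have "coord \<one>\<^bsub>G\<^esub> *\<^sub>v (Q *\<^sub>v y) = y"
        using assoc_mult_mat_vec[OF coord_carrier[OF G.one_closed] Q_carrier y] coord_one_mult_Q y by simp
      ultimately show ?thesis by simp
    qed
    then show ?thesis using W_carrier by blast
  qed
qed
end

section \<open>Characters\<close>

lemma irr_char_irreducible_rep:
  assumes "irr_char G \<chi>"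
  obtains n \<rho> where "irreducible_rep G n \<rho>" "\<And>g. g \<in> carrier G \<Longrightarrow> \<chi> g = mat_trace (\<rho> g)"
  using assms unfolding irr_char_def by auto

lemma irr_char_outside: "irr_char G \<chi> \<Longrightarrow> g \<notin> carrier G \<Longrightarrow> \<chi> g = 0"
  unfolding irr_char_def by auto

lemma irr_char_eqI:
  assumes "irr_char G \<chi>" "irr_char G \<psi>" "\<And>g. g \<in> carrier G \<Longrightarrow> \<chi> g = \<psi> g"
  shows "\<chi> = \<psi>"
  by (rule ext) (metis assms irr_char_outside)

lemma irr_char_one_neq_zero:
  assumes "irr_char G \<chi>" "group G"
  shows "\<chi> \<one>\<^bsub>G\<^esub> \<noteq> 0"
proof -
  obtain n \<rho> where irr: "irreducible_rep G n \<rho>" and \<chi>: "\<And>g. g \<in> carrier G \<Longrightarrow> \<chi> g = mat_trace (\<rho> g)"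
    using irr_char_irreducible_rep[OF assms(1)] by blast
  have "\<chi> \<one>\<^bsub>G\<^esub> = of_nat n"
    using \<chi> rep_one[OF irreducible_rep_is_rep[OF irr]] group.is_monoid[OF assms(2)] monoid.one_closed by fastforce
  then show ?thesis using irreducible_rep_dim_pos[OF irr] by simp
qed

lemma (in group) irr_char_conj:
  assumes "irr_char G \<chi>" "x \<in> carrier G" "g \<in> carrier G"
  shows "\<chi> (x \<otimes> g \<otimes> inv x) = \<chi> g"
proof -
  obtain n \<rho> where irr: "irreducible_rep G n \<rho>" and \<chi>: "\<And>g. g \<in> carrier G \<Longrightarrow> \<chi> g = mat_trace (\<rho> g)"
    using irr_char_irreducible_rep[OF assms(1)] by blast
  have rep: "is_rep G n \<rho>" using irreducible_rep_is_rep[OF irr] .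
  note \<rho> = rep_carrier[OF rep]
  have "mat_trace (\<rho> (x \<otimes> g \<otimes> inv x)) = mat_trace ((\<rho> x * \<rho> g) * \<rho> (inv x))"
    using assms(2,3) by (simp add: rep_mult[OF rep])
  also have "\<dots> = mat_trace (\<rho> (inv x) * (\<rho> x * \<rho> g))"
    using assms(2,3) \<rho> by (intro mat_trace_mult_comm[of _ n n]) (auto intro: mult_carrier_mat)
  also have "\<dots> = mat_trace ((\<rho> (inv x) * \<rho> x) * \<rho> g)"
    using assms(2,3) \<rho> by (simp add: assoc_mult_mat[of _ n n _ n _ n])
  also have "\<dots> = mat_trace (\<rho> g)" using rep_inv_mult[OF rep assms(2)] \<rho>[OF assms(3)] by simp
  finally show ?thesis using assms(2,3) by (simp add: \<chi>)
qed

lemma (in group) char_inner_induced: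
  assumes fin: "finite (carrier G)" and H: "subgroup H G"
    and conj_inv: "\<And>x g. x \<in> carrier G \<Longrightarrow> g \<in> carrier G \<Longrightarrow> \<beta> (x \<otimes> g \<otimes> inv x) = \<beta> g"
  shows "char_inner G (induced G H \<phi>) \<beta> = (\<Sum>h\<in>H. \<phi> h * cnj (\<beta> h)) / of_nat (card H)"
proof -
  have H_sub: "H \<subseteq> carrier G" using subgroup.subset[OF H] .
  have "(\<Sum>g\<in>carrier G. induced G H \<phi> g * cnj (\<beta> g)) =
      (\<Sum>g\<in>carrier G. \<Sum>x\<in>carrier G. (if x \<otimes> g \<otimes> inv x \<in> H then \<phi> (x \<otimes> g \<otimes> inv x) else 0)
        * cnj (\<beta> (x \<otimes> g \<otimes> inv x))) / of_nat (card H)"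
    by (simp add: induced_def sum_divide_distrib sum_distrib_right conj_inv)
  also have "(\<Sum>g\<in>carrier G. \<Sum>x\<in>carrier G. (if x \<otimes> g \<otimes> inv x \<in> H then \<phi> (x \<otimes> g \<otimes> inv x) else 0)
        * cnj (\<beta> (x \<otimes> g \<otimes> inv x))) =
      (\<Sum>x\<in>carrier G. \<Sum>k\<in>carrier G. (if k \<in> H then \<phi> k else 0) * cnj (\<beta> k))"
    by (subst sum.swap)
      (intro sum.cong refl sum_carrier_conj[of _ "\<lambda>k. (if k \<in> H then \<phi> k else 0) * cnj (\<beta> k)"], simp)
  also have "\<dots> = of_nat (card (carrier G)) * (\<Sum>h\<in>H. \<phi> h * cnj (\<beta> h))"
    using H_sub fin by (simp add: if_distrib[of "\<lambda>t. t * _"] sum.If_cases Int_absorb1 cong: if_cong)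
  finally show ?thesis
    using fin card_gt_0_iff[of "carrier G"] one_closed unfolding char_inner_def by auto
qed

lemma (in group) char_inner_induced_irr_char:
  assumes "finite (carrier G)" "subgroup H G" "irr_char G \<chi>"
  shows "char_inner G (induced G H \<phi>) \<chi> = (\<Sum>h\<in>H. \<phi> h * cnj (\<chi> h)) / of_nat (card H)"
  using char_inner_induced[OF assms(1,2)] irr_char_conj[OF assms(3)] by blast

section \<open>Almost monomial direct products\<close>

lemma irr_char_dirprod_decompose:
  assumes G: "group G" and H: "group H" and fin: "finite (carrier G)"
    and \<Theta>: "irr_char (G \<times>\<times> H) \<Theta>"
  obtains \<chi> \<psi> where "irr_char G \<chi>" "irr_char H \<psi>"
    "\<And>g h. g \<in> carrier G \<Longrightarrow> h \<in> carrier H \<Longrightarrow> \<Theta> (g,h) = \<chi> g * \<psi> h"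
proof -
  interpret G: group G by fact
  interpret H: group H by fact
  obtain n \<rho> where \<rho>_irr: "irreducible_rep (G \<times>\<times> H) n \<rho>"
    and \<Theta>_tr: "\<And>p. p \<in> carrier (G \<times>\<times> H) \<Longrightarrow> \<Theta> p = mat_trace (\<rho> p)"
    using irr_char_irreducible_rep[OF \<Theta>] by blast
  have \<rho>: "is_rep (G \<times>\<times> H) n \<rho>" using irreducible_rep_is_rep[OF \<rho>_irr] .
  have "is_rep G n (\<lambda>g. \<rho> (g, \<one>\<^bsub>H\<^esub>))"
    unfolding is_rep_def
  proof (intro conjI ballI)
    show "\<rho> (g, \<one>\<^bsub>H\<^esub>) \<in> carrier_mat n n" if "g \<in> carrier G" for g
      using rep_carrier[OF \<rho>] that by simp
    show "\<rho> (\<one>\<^bsub>G\<^esub>, \<one>\<^bsub>H\<^esub>) = 1\<^sub>m n" using rep_one[OF \<rho>] by simp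
    fix x y assume "x \<in> carrier G" "y \<in> carrier G"
    then show "\<rho> (x \<otimes>\<^bsub>G\<^esub> y, \<one>\<^bsub>H\<^esub>) = \<rho> (x, \<one>\<^bsub>H\<^esub>) * \<rho> (y, \<one>\<^bsub>H\<^esub>)"
      using rep_mult[OF \<rho>, of "(x, \<one>\<^bsub>H\<^esub>)" "(y, \<one>\<^bsub>H\<^esub>)"] by simp
  qed
  then obtain d \<sigma> P where "irreducible_rep G d \<sigma>" "P \<in> carrier_mat n d" "inj_mat P"
    "\<forall>g\<in>carrier G. \<rho> (g, \<one>\<^bsub>H\<^esub>) * P = P * \<sigma> g"
    using G.exists_irreducible_subrep irreducible_rep_dim_pos[OF \<rho>_irr] by blast
  then interpret irrep_dirprod G H n \<rho> d \<sigma> P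
    by unfold_locales (use fin \<rho>_irr in auto)
  show ?thesis
  proof
    show "irr_char G (\<lambda>g. if g \<in> carrier G then mat_trace (\<sigma> g) else 0)"
      unfolding irr_char_def using \<sigma>_irr by blast
    show "irr_char H (\<lambda>h. if h \<in> carrier H then mat_trace (\<tau> h) else 0)"
      unfolding irr_char_def using \<tau>_irr by blast
    fix g h assume "g \<in> carrier G" "h \<in> carrier H"
    then show "\<Theta> (g,h) = (if g \<in> carrier G then mat_trace (\<sigma> g) else 0) * (if h \<in> carrier H then mat_trace (\<tau> h) else 0)"
      using trace_formula mat_trace_\<tau> \<chi>_eq_trace \<Theta>_tr by simp
  qed
qed

lemma linear_char_dirprod:
  "linear_char G S \<phi> \<Longrightarrow> linear_char H T \<phi>' \<Longrightarrow> linear_char (G \<times>\<times> H) (S \<times> T) (\<lambda>p. \<phi> (fst p) * \<phi>' (snd p))"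
  unfolding linear_char_def by auto

lemma linear_char_trivial: "linear_char G {\<one>\<^bsub>G\<^esub>} (\<lambda>_. 1)"
  unfolding linear_char_def by simp

lemma char_inner_induced_dirprod:
  assumes G: "group G" and H: "group H" and fin_G: "finite (carrier G)" and fin_H: "finite (carrier H)"
    and S: "subgroup S G" and T: "subgroup T H"
    and \<Theta>: "irr_char (G \<times>\<times> H) \<Theta>" and \<chi>: "irr_char G \<chi>" and \<psi>: "irr_char H \<psi>"
    and \<Theta>_eq: "\<And>g h. g \<in> carrier G \<Longrightarrow> h \<in> carrier H \<Longrightarrow> \<Theta> (g,h) = \<chi> g * \<psi> h"
  shows "char_inner (G \<times>\<times> H) (induced (G \<times>\<times> H) (S \<times> T) (\<lambda>p. \<phi> (fst p) * \<phi>' (snd p))) \<Theta> =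
    char_inner G (induced G S \<phi>) \<chi> * char_inner H (induced H T \<phi>') \<psi>"
proof -
  interpret G: group G by fact
  interpret H: group H by fact
  interpret GH: group "G \<times>\<times> H" by (rule DirProd_group[OF G H])
  have ST: "subgroup (S \<times> T) (G \<times>\<times> H)" by (rule DirProd_subgroups[OF G S H T])
  have "(\<Sum>p\<in>S \<times> T. \<phi> (fst p) * \<phi>' (snd p) * cnj (\<Theta> p)) =
      (\<Sum>s\<in>S. \<Sum>t\<in>T. (\<phi> s * cnj (\<chi> s)) * (\<phi>' t * cnj (\<psi> t)))"
  proof -
    have "\<Theta> (s,t) = \<chi> s * \<psi> t" if "s \<in> S" "t \<in> T" for s t
      using \<Theta>_eq that subgroup.subset[OF S] subgroup.subset[OF T] by blast
    then show ?thesis unfolding sum.cartesian_product by (intro sum.cong refl) (auto simp: mult_ac)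
  qed
  also have "\<dots> = (\<Sum>s\<in>S. \<phi> s * cnj (\<chi> s)) * (\<Sum>t\<in>T. \<phi>' t * cnj (\<psi> t))"
    by (simp add: sum_product)
  finally have "(\<Sum>p\<in>S \<times> T. \<phi> (fst p) * \<phi>' (snd p) * cnj (\<Theta> p)) =
      (\<Sum>s\<in>S. \<phi> s * cnj (\<chi> s)) * (\<Sum>t\<in>T. \<phi>' t * cnj (\<psi> t))" .
  then show ?thesis
    using GH.char_inner_induced_irr_char[OF _ ST \<Theta>] G.char_inner_induced_irr_char[OF fin_G S \<chi>]
      H.char_inner_induced_irr_char[OF fin_H T \<psi>] fin_G fin_H
    by (simp add: card_cartesian_product)
qed

lemma (in group) char_inner_induced_trivial:
  assumes "finite (carrier G)" "irr_char G \<chi>"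
  shows "char_inner G (induced G {\<one>} (\<lambda>_. 1)) \<chi> = cnj (\<chi> \<one>)"
  using char_inner_induced_irr_char[OF assms(1) triv_subgroup assms(2)] by simp

lemma almost_monomial_dirprod:
  assumes G: "group G" and H: "group H" and fin_G: "finite (carrier G)" and fin_H: "finite (carrier H)"
    and am_G: "almost_monomial G" and am_H: "almost_monomial H"
  shows "almost_monomial (G \<times>\<times> H)"
  unfolding almost_monomial_def
proof (intro allI impI)
  interpret G: group G by fact
  interpret H: group H by fact
  fix \<Theta>1 \<Theta>2 assume "irr_char (G \<times>\<times> H) \<Theta>1 \<and> irr_char (G \<times>\<times> H) \<Theta>2 \<and> \<Theta>1 \<noteq> \<Theta>2"
  then have \<Theta>1: "irr_char (G \<times>\<times> H) \<Theta>1" and \<Theta>2: "irr_char (G \<times>\<times> H) \<Theta>2" and ne: "\<Theta>1 \<noteq> \<Theta>2" by auto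
  obtain \<chi>1 \<psi>1 where \<chi>1: "irr_char G \<chi>1" and \<psi>1: "irr_char H \<psi>1"
    and \<Theta>1_eq: "\<And>g h. g \<in> carrier G \<Longrightarrow> h \<in> carrier H \<Longrightarrow> \<Theta>1 (g,h) = \<chi>1 g * \<psi>1 h"
    using irr_char_dirprod_decompose[OF G H fin_G \<Theta>1] by blast
  obtain \<chi>2 \<psi>2 where \<chi>2: "irr_char G \<chi>2" and \<psi>2: "irr_char H \<psi>2"
    and \<Theta>2_eq: "\<And>g h. g \<in> carrier G \<Longrightarrow> h \<in> carrier H \<Longrightarrow> \<Theta>2 (g,h) = \<chi>2 g * \<psi>2 h"
    using irr_char_dirprod_decompose[OF G H fin_G \<Theta>2] by blast
  note inner1 = char_inner_induced_dirprod[OF G H fin_G fin_H _ _ \<Theta>1 \<chi>1 \<psi>1 \<Theta>1_eq]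
  note inner2 = char_inner_induced_dirprod[OF G H fin_G fin_H _ _ \<Theta>2 \<chi>2 \<psi>2 \<Theta>2_eq]
  show "\<exists>K \<mu>. subgroup K (G \<times>\<times> H) \<and> linear_char (G \<times>\<times> H) K \<mu> \<and>
      char_inner (G \<times>\<times> H) (induced (G \<times>\<times> H) K \<mu>) \<Theta>1 \<noteq> 0 \<and>
      char_inner (G \<times>\<times> H) (induced (G \<times>\<times> H) K \<mu>) \<Theta>2 = 0"
  proof (cases "\<chi>1 = \<chi>2")
    case False
    then obtain S \<phi> where S: "subgroup S G" and \<phi>: "linear_char G S \<phi>"
      and "char_inner G (induced G S \<phi>) \<chi>1 \<noteq> 0" "char_inner G (induced G S \<phi>) \<chi>2 = 0"
      using am_G \<chi>1 \<chi>2 unfolding almost_monomial_def by blast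
    then show ?thesis
      using inner1[OF S H.triv_subgroup, of \<phi> "\<lambda>_. 1"] inner2[OF S H.triv_subgroup, of \<phi> "\<lambda>_. 1"]
        H.char_inner_induced_trivial[OF fin_H] \<psi>1 \<psi>2 irr_char_one_neq_zero[OF \<psi>1 H]
        DirProd_subgroups[OF G S H H.triv_subgroup] linear_char_dirprod[OF \<phi> linear_char_trivial]
      by (intro exI conjI) auto
  next
    case True
    have "\<psi>1 \<noteq> \<psi>2"
    proof
      assume "\<psi>1 = \<psi>2"
      then have "\<Theta>1 = \<Theta>2" using True \<Theta>1_eq \<Theta>2_eq by (intro irr_char_eqI[OF \<Theta>1 \<Theta>2]) auto
      with ne show False ..
    qed
    then obtain T \<phi> where T: "subgroup T H" and \<phi>: "linear_char H T \<phi>"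
      and "char_inner H (induced H T \<phi>) \<psi>1 \<noteq> 0" "char_inner H (induced H T \<phi>) \<psi>2 = 0"
      using am_H \<psi>1 \<psi>2 unfolding almost_monomial_def by blast
    then show ?thesis
      using inner1[OF G.triv_subgroup T, of "\<lambda>_. 1" \<phi>] inner2[OF G.triv_subgroup T, of "\<lambda>_. 1" \<phi>]
        G.char_inner_induced_trivial[OF fin_G] \<chi>1 \<chi>2 irr_char_one_neq_zero[OF \<chi>1 G]
        DirProd_subgroups[OF G G.triv_subgroup H T] linear_char_dirprod[OF linear_char_trivial \<phi>]
      by (intro exI conjI) auto
  qed
qed

section \<open>Almost monomial homomorphic images\<close>

context group_hom
begin

lemma irr_char_comp:
  assumes surj: "h ` carrier G = carrier H" and \<chi>: "irr_char H \<chi>"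
  shows "irr_char G (\<lambda>g. if g \<in> carrier G then \<chi> (h g) else 0)"
proof -
  obtain n \<rho> where irr: "irreducible_rep H n \<rho>" and \<chi>_tr: "\<And>x. x \<in> carrier H \<Longrightarrow> \<chi> x = mat_trace (\<rho> x)"
    using irr_char_irreducible_rep[OF \<chi>] by blast
  have rep: "is_rep H n \<rho>" using irreducible_rep_is_rep[OF irr] .
  have rep_comp: "is_rep G n (\<rho> \<circ> h)"
    unfolding is_rep_def using rep_carrier[OF rep] rep_one[OF rep] rep_mult[OF rep] by simp
  have "irreducible_rep G n (\<rho> \<circ> h)"
    unfolding irreducible_rep_def
  proof (intro conjI irreducible_rep_dim_pos[OF irr] rep_comp allI impI)
    fix W assume W: "invariant_subspace G n (\<rho> \<circ> h) W"
    have "\<forall>x\<in>carrier H. \<forall>v\<in>W. \<rho> x *\<^sub>v v \<in> W"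
    proof (intro ballI)
      fix x v assume "x \<in> carrier H" "v \<in> W"
      moreover from this(1) obtain g where "g \<in> carrier G" "x = h g" by (auto simp flip: surj)
      ultimately show "\<rho> x *\<^sub>v v \<in> W" using W unfolding invariant_subspace_def by simp
    qed
    with W have "invariant_subspace H n \<rho> W"
      by (simp add: invariant_subspace_def)
    then show "W = {0\<^sub>v n} \<or> W = carrier_vec n" by (rule irreducible_repD[OF irr])
  qed
  moreover have "(\<lambda>g. if g \<in> carrier G then \<chi> (h g) else 0) = (\<lambda>g. if g \<in> carrier G then mat_trace ((\<rho> \<circ> h) g) else 0)"
    using \<chi>_tr by auto
  ultimately show ?thesis unfolding irr_char_def by (intro exI[of _ n] exI[of _ "\<rho> \<circ> h"] conjI)
qed

lemma card_subgroup_fibre: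
  assumes K: "subgroup K G" and a: "a \<in> K"
  shows "card {k \<in> K. h k = h a} = card {k \<in> K. h k = \<one>\<^bsub>H\<^esub>}"
proof -
  have K_sub: "K \<subseteq> carrier G" using subgroup.subset[OF K] .
  have ac: "a \<in> carrier G" using a K_sub by auto
  have "bij_betw (\<lambda>k. a \<otimes> k) {k \<in> K. h k = \<one>\<^bsub>H\<^esub>} {k \<in> K. h k = h a}"
  proof (rule bij_betwI[where g="\<lambda>k. inv a \<otimes> k"])
    show "(\<lambda>k. a \<otimes> k) \<in> {k \<in> K. h k = \<one>\<^bsub>H\<^esub>} \<rightarrow> {k \<in> K. h k = h a}"
      using a ac K_sub subgroup.m_closed[OF K] by auto
    show "(\<lambda>k. inv a \<otimes> k) \<in> {k \<in> K. h k = h a} \<rightarrow> {k \<in> K. h k = \<one>\<^bsub>H\<^esub>}"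
      using a ac K_sub subgroup.m_closed[OF K] subgroup.m_inv_closed[OF K] by auto
  qed (use ac K_sub in \<open>auto simp: G.inv_mult_cancel_left G.mult_inv_cancel_left\<close>)
  then show ?thesis by (simp add: bij_betw_same_card)
qed

text \<open>Multiplying by \<open>b \<in> K \<inter> ker h\<close> scales the (nonzero) sum by \<open>\<theta> b\<close>, so \<open>\<theta> b = 1\<close>.\<close>

lemma linear_char_const_on_fibres:
  assumes K: "subgroup K G" and \<theta>: "linear_char G K \<theta>"
    and nz: "(\<Sum>k\<in>K. \<theta> k * cnj (\<chi> (h k))) \<noteq> 0"
    and a: "a \<in> K" "a' \<in> K" "h a = h a'"
  shows "\<theta> a = \<theta> a'"
proof -
  have K_sub: "K \<subseteq> carrier G" using subgroup.subset[OF K] .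
  have \<theta>_mult: "\<And>x y. x \<in> K \<Longrightarrow> y \<in> K \<Longrightarrow> \<theta> (x \<otimes> y) = \<theta> x * \<theta> y"
    using \<theta> unfolding linear_char_def by auto
  have \<theta>_ker: "\<theta> b = 1" if b: "b \<in> K" "h b = \<one>\<^bsub>H\<^esub>" for b
  proof (rule ccontr)
    assume ne: "\<theta> b \<noteq> 1"
    define f where "f k = \<theta> k * cnj (\<chi> (h k))" for k
    have "(\<Sum>k\<in>K. f k) = (\<Sum>k\<in>K. f (b \<otimes> k))"
      by (rule G.sum_subgroup_mult_left[OF K b(1), symmetric])
    also have "\<dots> = (\<Sum>k\<in>K. \<theta> b * f k)"
      using b K_sub \<theta>_mult by (intro sum.cong refl) (auto simp: f_def subset_iff)
    finally have "(\<Sum>k\<in>K. f k) = \<theta> b * (\<Sum>k\<in>K. f k)" by (metis sum_distrib_left)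
    then have "(1 - \<theta> b) * (\<Sum>k\<in>K. f k) = 0" by (simp add: algebra_simps)
    with ne nz show False unfolding f_def by simp
  qed
  have ac: "a \<in> carrier G" "a' \<in> carrier G" using a K_sub by auto
  have K_quot: "a \<otimes> inv a' \<in> K" using a subgroup.m_closed[OF K] subgroup.m_inv_closed[OF K] by blast
  have "h (a \<otimes> inv a') = \<one>\<^bsub>H\<^esub>" using a ac by simp
  then have "\<theta> ((a \<otimes> inv a') \<otimes> a') = \<theta> a'"
    using \<theta>_mult[OF K_quot a(2)] \<theta>_ker[OF K_quot] by simp
  then show ?thesis using ac by (simp add: G.inv_mult_cancel_right)
qed

lemma linear_char_factor:
  assumes fin: "finite (carrier G)" and K: "subgroup K G" and \<theta>: "linear_char G K \<theta>"
    and nz: "(\<Sum>k\<in>K. \<theta> k * cnj (\<chi> (h k))) \<noteq> 0"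
  obtains \<mu> c where "linear_char H (h ` K) \<mu>" "c \<noteq> (0::complex)"
    "\<And>\<alpha>. (\<Sum>k\<in>K. \<theta> k * cnj (\<alpha> (h k))) = c * (\<Sum>q\<in>h ` K. \<mu> q * cnj (\<alpha> q))"
proof -
  have K_sub: "K \<subseteq> carrier G" using subgroup.subset[OF K] .
  have fin_K: "finite K" using K_sub fin finite_subset by blast
  have \<theta>_nz: "\<And>k. k \<in> K \<Longrightarrow> \<theta> k \<noteq> 0"
    and \<theta>_mult: "\<And>x y. x \<in> K \<Longrightarrow> y \<in> K \<Longrightarrow> \<theta> (x \<otimes> y) = \<theta> x * \<theta> y"
    using \<theta> unfolding linear_char_def by auto
  define \<mu> where "\<mu> q = \<theta> (SOME k. k \<in> K \<and> h k = q)" for q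
  have \<theta>_\<mu>: "\<theta> k = \<mu> (h k)" if k: "k \<in> K" for k
  proof -
    define k' where "k' = (SOME k'. k' \<in> K \<and> h k' = h k)"
    have "k' \<in> K \<and> h k' = h k" unfolding k'_def by (rule someI[of _ k]) (simp add: k)
    then show ?thesis unfolding \<mu>_def k'_def[symmetric]
      using linear_char_const_on_fibres[OF K \<theta> nz k] by simp
  qed
  have "linear_char H (h ` K) \<mu>"
    unfolding linear_char_def
  proof (intro conjI ballI)
    fix q assume "q \<in> h ` K"
    then show "\<mu> q \<noteq> 0" using \<theta>_\<mu> \<theta>_nz by auto
  next
    fix q q' assume "q \<in> h ` K" "q' \<in> h ` K"
    then obtain k k' where k: "k \<in> K" "k' \<in> K" and q: "q = h k" "q' = h k'" by auto
    moreover have "k \<in> carrier G" "k' \<in> carrier G" using k K_sub by auto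
    ultimately have "q \<otimes>\<^bsub>H\<^esub> q' = h (k \<otimes> k')" by simp
    then show "\<mu> (q \<otimes>\<^bsub>H\<^esub> q') = \<mu> q * \<mu> q'"
      using \<theta>_\<mu> \<theta>_mult[OF k] subgroup.m_closed[OF K k] k q by simp
  qed
  define c where "c = card {k \<in> K. h k = \<one>\<^bsub>H\<^esub>}"
  have "\<one> \<in> {k \<in> K. h k = \<one>\<^bsub>H\<^esub>}" using subgroup.one_closed[OF K] by simp
  then have "c > 0" unfolding c_def using fin_K card_gt_0_iff by fastforce
  moreover have "(\<Sum>k\<in>K. \<theta> k * cnj (\<alpha> (h k))) = of_nat c * (\<Sum>q\<in>h ` K. \<mu> q * cnj (\<alpha> q))" for \<alpha>
  proof -
    have fibre_sum: "(\<Sum>k\<in>{k \<in> K. h k = q}. \<theta> k * cnj (\<alpha> (h k))) = of_nat c * (\<mu> q * cnj (\<alpha> q))"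
      if q: "q \<in> h ` K" for q
    proof -
      obtain a where a: "a \<in> K" "q = h a" using q by blast
      have "(\<Sum>k\<in>{k \<in> K. h k = q}. \<theta> k * cnj (\<alpha> (h k))) = (\<Sum>k\<in>{k \<in> K. h k = q}. \<mu> q * cnj (\<alpha> q))"
        by (rule sum.cong) (auto simp: \<theta>_\<mu>)
      then show ?thesis using card_subgroup_fibre[OF K a(1)] a(2) by (simp add: c_def)
    qed
    have "(\<Sum>k\<in>K. \<theta> k * cnj (\<alpha> (h k))) = (\<Sum>q\<in>h ` K. \<Sum>k\<in>{k \<in> K. h k = q}. \<theta> k * cnj (\<alpha> (h k)))"
      by (rule sum.image_gen[OF fin_K])
    also have "\<dots> = (\<Sum>q\<in>h ` K. of_nat c * (\<mu> q * cnj (\<alpha> q)))"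
      by (rule sum.cong[OF refl fibre_sum])
    finally show ?thesis by (simp add: sum_distrib_left)
  qed
  ultimately show ?thesis using \<open>linear_char H (h ` K) \<mu>\<close> that[of \<mu> "of_nat c"] by simp
qed

lemma almost_monomial_image:
  assumes surj: "h ` carrier G = carrier H" and fin: "finite (carrier G)" and am: "almost_monomial G"
  shows "almost_monomial H"
  unfolding almost_monomial_def
proof (intro allI impI)
  fix \<chi> \<psi> assume "irr_char H \<chi> \<and> irr_char H \<psi> \<and> \<chi> \<noteq> \<psi>"
  then have \<chi>: "irr_char H \<chi>" and \<psi>: "irr_char H \<psi>" and ne: "\<chi> \<noteq> \<psi>" by auto
  define lift where "lift \<alpha> = (\<lambda>g. if g \<in> carrier G then \<alpha> (h g) else (0::complex))" for \<alpha>
  have lift_irr: "irr_char G (lift \<alpha>)" if "irr_char H \<alpha>" for \<alpha>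
    unfolding lift_def using irr_char_comp[OF surj that] .
  have "lift \<chi> \<noteq> lift \<psi>"
  proof
    assume eq: "lift \<chi> = lift \<psi>"
    have "\<chi> x = \<psi> x" if "x \<in> carrier H" for x
    proof -
      from that obtain g where "g \<in> carrier G" "x = h g" by (auto simp flip: surj)
      then show ?thesis using fun_cong[OF eq, of g] by (simp add: lift_def)
    qed
    then show False using ne irr_char_eqI[OF \<chi> \<psi>] by blast
  qed
  then obtain K \<theta> where K: "subgroup K G" and \<theta>: "linear_char G K \<theta>"
    and inner_\<chi>: "char_inner G (induced G K \<theta>) (lift \<chi>) \<noteq> 0"
    and inner_\<psi>: "char_inner G (induced G K \<theta>) (lift \<psi>) = 0"
    using am lift_irr[OF \<chi>] lift_irr[OF \<psi>] unfolding almost_monomial_def by blast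
  have inner_lift: "char_inner G (induced G K \<theta>) (lift \<alpha>) = (\<Sum>k\<in>K. \<theta> k * cnj (\<alpha> (h k))) / of_nat (card K)"
    if "irr_char H \<alpha>" for \<alpha>
    using G.char_inner_induced_irr_char[OF fin K lift_irr[OF that]] subgroup.subset[OF K]
    by (simp add: lift_def subset_iff)
  have card_K: "card K > 0" using subgroup.finite_imp_card_positive[OF K fin] .
  have sum_\<chi>: "(\<Sum>k\<in>K. \<theta> k * cnj (\<chi> (h k))) \<noteq> 0" using inner_\<chi> inner_lift[OF \<chi>] by auto
  have sum_\<psi>: "(\<Sum>k\<in>K. \<theta> k * cnj (\<psi> (h k))) = 0" using inner_\<psi> inner_lift[OF \<psi>] card_K by simp
  obtain \<mu> c where \<mu>: "linear_char H (h ` K) \<mu>" and "c \<noteq> 0"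
    and sums: "\<And>\<alpha>. (\<Sum>k\<in>K. \<theta> k * cnj (\<alpha> (h k))) = c * (\<Sum>q\<in>h ` K. \<mu> q * cnj (\<alpha> q))"
    using linear_char_factor[OF fin K \<theta> sum_\<chi>] by blast
  have hK: "subgroup (h ` K) H" by (rule subgroup_img_is_subgroup[OF K])
  have fin_H: "finite (carrier H)" using finite_imageI[OF fin, of h] by (simp add: surj)
  have card_hK: "card (h ` K) > 0" by (rule subgroup.finite_imp_card_positive[OF hK fin_H])
  show "\<exists>S \<mu>. subgroup S H \<and> linear_char H S \<mu> \<and> char_inner H (induced H S \<mu>) \<chi> \<noteq> 0 \<and>
      char_inner H (induced H S \<mu>) \<psi> = 0"
  proof (intro exI conjI)
    show "char_inner H (induced H (h ` K) \<mu>) \<chi> \<noteq> 0"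
      using H.char_inner_induced_irr_char[OF fin_H hK \<chi>] sum_\<chi> sums[of \<chi>] card_hK by simp
    show "char_inner H (induced H (h ` K) \<mu>) \<psi> = 0"
      using H.char_inner_induced_irr_char[OF fin_H hK \<psi>] sum_\<psi> sums[of \<psi>] \<open>c \<noteq> 0\<close> by simp
  qed (fact hK \<mu>)+
qed

end

lemma group_hom_fst: "group G \<Longrightarrow> group H \<Longrightarrow> group_hom (G \<times>\<times> H) G fst"
  unfolding group_hom_def group_hom_axioms_def hom_def by (auto intro: DirProd_group)

lemma group_hom_snd: "group G \<Longrightarrow> group H \<Longrightarrow> group_hom (G \<times>\<times> H) H snd"
  unfolding group_hom_def group_hom_axioms_def hom_def by (auto intro: DirProd_group)

theorem theorem2p3:
  fixes G :: "('a, 'b) monoid_scheme" and G' :: "('c, 'd) monoid_scheme"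
  assumes "group G" and "group G'"
    and "finite (carrier G)" and "finite (carrier G')"
  shows "(almost_monomial G \<and> almost_monomial G') \<longleftrightarrow> almost_monomial (G \<times>\<times> G')"
proof
  assume "almost_monomial G \<and> almost_monomial G'"
  then show "almost_monomial (G \<times>\<times> G')" using almost_monomial_dirprod[OF assms] by blast
next
  assume am: "almost_monomial (G \<times>\<times> G')"
  have fin: "finite (carrier (G \<times>\<times> G'))" using assms(3,4) by simp
  have nonempty: "carrier G \<noteq> {}" "carrier G' \<noteq> {}"
    using group.is_monoid[OF assms(1)] group.is_monoid[OF assms(2)] monoid.one_closed by blast+
  have "fst ` carrier (G \<times>\<times> G') = carrier G" "snd ` carrier (G \<times>\<times> G') = carrier G'"
    using nonempty by simp_all
  then show "almost_monomial G \<and> almost_monomial G'"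
    using group_hom.almost_monomial_image[OF group_hom_fst[OF assms(1,2)] _ fin am]
      group_hom.almost_monomial_image[OF group_hom_snd[OF assms(1,2)] _ fin am]
    by blast
qed

end
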